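(* Let $n\ge5$. The map $\sigma:\mathcal{T}_n/\!\sim\;\to\mathcal{B}_n$ is a bijection.
   Context: $\mathcal{T}_n$ is the set of triangulations of the punctured regular $n$-gon $\mathcal{P}_n$ (a regular $n$-gon with a puncture in its center), i.e. maximal sets of pairwise non-crossing tagged diagonals: untagged arcs between border vertices $a\neq b$ homotopic to the counterclockwise border path from $a$ to $b$ passing through at least $3$ border vertices, and arcs from the puncture to a border vertex with a tag $\pm1$, where two puncture arcs at $a,c$ with tags $\epsilon,\epsilon'$ cross iff $a\ne c$ and $\epsilon\ne\epsilon'$. The relation $\sim$ is generated by rotating the polygon and by inverting all tags. $\mathcal{B}_n$ is the set of equivalence classes of planar rooted trees such that every node other than the root has either two or no children (so each full subtree not containing the root is a full binary tree), the tree has exactly $n$ leaves, and two trees are equivalent if one is obtained from the other by (cyclically) rotating the subtrees at the root. The map $\sigma$: given $\Delta$, when two diagonals join the puncture to the same border vertex draw one of them as a loop at that vertex enclosing the puncture (the other lying inside, forming a self-folded triangle). Take one node for each triangle of $\Delta$; join two triangles by an edge if they are adjacent and their common side is not an arc from the puncture to the border (a loop does not count as such an arc); for each border edge of a triangle draw an edge from that triangle's node crossing the border edge to a new leaf outside the polygon; finally identify all nodes of triangles having the puncture as a vertex into a single root. With the planar embedding inherited from the polygon, this gives a tree whose class in $\mathcal{B}_n$ is $\sigma(\Delta)$; it depends only on the $\sim$-class of $\Delta$. *)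

theory Defs
  imports Main
begin

section \<open>The punctured n-gon: vertices 0..n-1 labelled counterclockwise\<close>

text \<open>Counterclockwise distance from border vertex a to border vertex b (for a, b < n);
  the ccw border path from a to b passes through ccw_dist n a b + 1 border vertices.\<close>
definition ccw_dist :: "nat \<Rightarrow> nat \<Rightarrow> nat \<Rightarrow> nat" where
  "ccw_dist n a b = (b + n - a) mod n"

text \<open>Border edges (edge i joins vertex i to vertex i+1 mod n) of the ccw path from a to b.\<close>
definition bd_edges :: "nat \<Rightarrow> nat \<Rightarrow> nat \<Rightarrow> nat set" where
  "bd_edges n a b = {(a + i) mod n | i. i < ccw_dist n a b}"

definition bd_inner :: "nat \<Rightarrow> nat \<Rightarrow> nat \<Rightarrow> nat set" where
  "bd_inner n a b = {(a + i) mod n | i. 0 < i \<and> i < ccw_dist n a b}"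

text \<open>Tagged arcs: Bd a b is the untagged arc from a to b homotopic to the ccw border path
  from a to b; Pu a e is the arc from the puncture to a with tag +1 (e = True) or -1 (e = False).\<close>
datatype tarc = Bd nat nat | Pu nat bool

definition tagged_diags :: "nat \<Rightarrow> tarc set" where
  "tagged_diags n =
     {Bd a b | a b. a < n \<and> b < n \<and> a \<noteq> b \<and> ccw_dist n a b + 1 \<ge> 3}
   \<union> {Pu a e | a e. a < n}"

text \<open>Crossing: two border arcs cross iff the regions they cut off (away from the puncture),
  described by their sets of border edges, are neither nested nor disjoint; a border arc
  crosses a puncture arc iff the latter ends strictly inside the former's border path;
  puncture arcs cross as in the paper.\<close>
fun crosses :: "nat \<Rightarrow> tarc \<Rightarrow> tarc \<Rightarrow> bool" where
  "crosses n (Bd a b) (Bd c d) =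
     (\<not> (bd_edges n a b \<subseteq> bd_edges n c d \<or> bd_edges n c d \<subseteq> bd_edges n a b
         \<or> bd_edges n a b \<inter> bd_edges n c d = {}))"
| "crosses n (Bd a b) (Pu c e) = (c \<in> bd_inner n a b)"
| "crosses n (Pu c e) (Bd a b) = (c \<in> bd_inner n a b)"
| "crosses n (Pu a e) (Pu c e') = (a \<noteq> c \<and> e \<noteq> e')"

definition noncrossing :: "nat \<Rightarrow> tarc set \<Rightarrow> bool" where
  "noncrossing n S = (\<forall>x\<in>S. \<forall>y\<in>S. \<not> crosses n x y)"

definition triangulation :: "nat \<Rightarrow> tarc set \<Rightarrow> bool" where
  "triangulation n T =
     (T \<subseteq> tagged_diags n \<and> noncrossing n T \<and>
      (\<forall>S. T \<subseteq> S \<and> S \<subseteq> tagged_diags n \<and> noncrossing n S \<longrightarrow> S = T))"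

definition Tri :: "nat \<Rightarrow> tarc set set" where
  "Tri n = {T. triangulation n T}"

fun rot_arc :: "nat \<Rightarrow> tarc \<Rightarrow> tarc" where
  "rot_arc n (Bd a b) = Bd ((a + 1) mod n) ((b + 1) mod n)"
| "rot_arc n (Pu a e) = Pu ((a + 1) mod n) e"

fun flip_arc :: "tarc \<Rightarrow> tarc" where
  "flip_arc (Bd a b) = Bd a b"
| "flip_arc (Pu a e) = Pu a (\<not> e)"

definition tri_step :: "nat \<Rightarrow> tarc set \<Rightarrow> tarc set \<Rightarrow> bool" where
  "tri_step n X Y = (Y = rot_arc n ` X \<or> Y = flip_arc ` X)"

definition tri_rel :: "nat \<Rightarrow> (tarc set \<times> tarc set) set" where
  "tri_rel n = {(X, Y). X \<in> Tri n \<and> Y \<in> Tri n \<and> equivclp (tri_step n) X Y}"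

datatype fbt = Lf | Nd fbt fbt

fun leaves :: "fbt \<Rightarrow> nat" where
  "leaves Lf = 1"
| "leaves (Nd l r) = leaves l + leaves r"

text \<open>A planar rooted tree whose non-root nodes have two or no children is given by the
  ordered list of the (full binary) subtrees at the root.\<close>
definition root_leaves :: "fbt list \<Rightarrow> nat" where
  "root_leaves ts = (if ts = [] then 1 else sum_list (map leaves ts))"

definition Btrees :: "nat \<Rightarrow> fbt list set" where
  "Btrees n = {ts. root_leaves ts = n}"

definition brel :: "nat \<Rightarrow> (fbt list \<times> fbt list) set" where
  "brel n = {(s, t). s \<in> Btrees n \<and> t \<in> Btrees n \<and> (\<exists>k. t = rotate k s)}"

definition B_cls :: "nat \<Rightarrow> fbt list set set" where
  "B_cls n = Btrees n // brel n"

definition T_cls :: "nat \<Rightarrow> tarc set set set" where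
  "T_cls n = Tri n // tri_rel n"

text \<open>(a,b) is a side of a triangle of T: a border edge or a border arc of T.\<close>
definition side :: "nat \<Rightarrow> tarc set \<Rightarrow> nat \<Rightarrow> nat \<Rightarrow> bool" where
  "side n T a b = (ccw_dist n a b = 1 \<or> Bd a b \<in> T)"

text \<open>Subtree hanging off the side (a,b) (away from the puncture): a leaf if (a,b) is a border
  edge, otherwise the node of the triangle (a,v,b) of T inside the region, with the subtrees
  through the sides (a,v) and (v,b), in counterclockwise order. The first nat is fuel.\<close>
fun subf :: "nat \<Rightarrow> tarc set \<Rightarrow> nat \<Rightarrow> nat \<Rightarrow> nat \<Rightarrow> fbt" where
  "subf n T 0 a b = Lf"
| "subf n T (Suc k) a b =
     (if ccw_dist n a b \<le> 1 then Lf
      else (let v = (THE v. v \<in> bd_inner n a b \<and> side n T a v \<and> side n T v b)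
            in Nd (subf n T k a v) (subf n T k v b)))"

definition subt :: "nat \<Rightarrow> tarc set \<Rightarrow> nat \<Rightarrow> nat \<Rightarrow> fbt" where
  "subt n T a b = subf n T (ccw_dist n a b) a b"

text \<open>sigma on a triangulation: if T contains both tagged versions of the puncture arc at c
  (self-folded triangle with loop at c), the root has one child, the triangle (c,v,c) bounded
  by the loop; otherwise the puncture triangles (p_i, p_(i+1), puncture) are merged into the
  root, whose children in ccw order hang off the sides (p_i, p_(i+1)).\<close>
definition sigma_tri :: "nat \<Rightarrow> tarc set \<Rightarrow> fbt list" where
  "sigma_tri n T =
     (if \<exists>c. Pu c True \<in> T \<and> Pu c False \<in> T then
        (let c = (THE c. Pu c True \<in> T \<and> Pu c False \<in> T);
             v = (THE v. v < n \<and> v \<noteq> c \<and> side n T c v \<and> side n T v c)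
         in [Nd (subt n T c v) (subt n T v c)])
      else
        (let ps = sorted_list_of_set {c. \<exists>e. Pu c e \<in> T}; k = length ps
         in map (\<lambda>i. subt n T (ps ! i) (ps ! ((i + 1) mod k))) [0..<k]))"

definition sigma_cls :: "nat \<Rightarrow> tarc set set \<Rightarrow> fbt list set" where
  "sigma_cls n C = brel n `` {sigma_tri n (SOME T. T \<in> C)}"

end

theory Submission
  imports Defs "HOL-Number_Theory.Cong"
begin

text \<open>Fix a puncture arc of a triangulation at a vertex p and measure vertices by their
  counterclockwise offset from p. The puncture arcs end at offsets 0 = q_0 < ... < q_(k-1) < n, and
  the border arcs become a laminar family of intervals of offsets, none containing a q_i in its
  interior. Such a family lies inside the interval family of a list of full binary trees, the
  i-th one triangulating the polygon between q_i and q_(i+1); that family, drawn as arcs, has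
  exactly n elements, so by maximality it is the triangulation itself. Thus every triangulation is
  determined by a forest in B_n together with the base vertex p and the tag e, and sigma reads the
  forest back up to rotation. Rotation of the polygon and inversion of tags change only p and e,
  while rotating the forest is undone by moving p, so the classes on both sides correspond.\<close>

section \<open>Coordinates relative to a base vertex\<close>

text \<open>A border arc cutting off a region away from the base vertex p is
  Bd (vtx n p x) (vtx n p y) with x < y \<le> n; its border path covers the edges vtx n p ` {x..<y}.\<close>
definition vtx :: "nat \<Rightarrow> nat \<Rightarrow> nat \<Rightarrow> nat" where
  "vtx n p x = (p + x) mod n"

lemma vtx_less: "0 < n \<Longrightarrow> vtx n p x < n"
  by (simp add: vtx_def)

lemma vtx_mod: "vtx n p x mod n = vtx n p x"
  by (simp add: vtx_def)

lemma vtx_add_self: "vtx n p (x + n) = vtx n p x"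
  by (simp add: vtx_def add.assoc[symmetric])

lemma vtx_self: "vtx n p n = vtx n p 0"
  by (simp add: vtx_def)

lemma vtx_shift_base: "vtx n (p + b) x = vtx n p (b + x)"
  by (simp add: vtx_def add.assoc)

lemma vtx_mod_base: "vtx n (p mod n) x = vtx n p x"
  by (simp add: vtx_def mod_add_left_eq)

lemma vtx_add_self_base: "vtx n (p + n) x = vtx n p x"
  by (metis vtx_add_self vtx_shift_base add.commute)

lemma Suc_vtx_mod: "Suc (vtx n p x) mod n = vtx n (Suc p) x"
  by (simp add: vtx_def mod_Suc_eq)

lemma vtx_add: "vtx n p (x + k) = (vtx n p x + k) mod n"
  unfolding vtx_def mod_add_left_eq by (simp add: add.assoc)

lemma vtx_add_mod: "(vtx n p x + k) mod n = vtx n (p + k) x"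
  unfolding vtx_def mod_add_left_eq by (simp add: ac_simps)

lemma vtx_inj: "x < n \<Longrightarrow> y < n \<Longrightarrow> vtx n p x = vtx n p y \<Longrightarrow> x = y"
  unfolding vtx_def by (metis cong_add_lcancel_nat cong_def cong_less_imp_eq_nat le0)

lemma inj_on_vtx: "inj_on (vtx n p) {..<n}"
  by (auto intro: inj_onI vtx_inj)

lemma vtx_offset: "a < n \<Longrightarrow> c < n \<Longrightarrow> vtx n c ((a + n - c) mod n) = a"
  unfolding vtx_def by (simp add: mod_add_right_eq)

lemma ccw_dist_less: "0 < n \<Longrightarrow> ccw_dist n a b < n"
  by (simp add: ccw_dist_def)

lemma ccw_dist_add: "a < n \<Longrightarrow> b < n \<Longrightarrow> (a + ccw_dist n a b) mod n = b"
  unfolding ccw_dist_def by (simp add: mod_add_right_eq)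

lemma vtx_offset_ccw_dist:
  assumes "a < n" "b < n" "c < n"
  shows "vtx n c ((a + n - c) mod n + ccw_dist n a b) = b"
  using vtx_add ccw_dist_add[OF assms(1,2)] vtx_offset[OF assms(1,3)] by simp

lemma ccw_dist_vtx:
  assumes "0 < n" "x \<le> y" "y - x < n"
  shows "ccw_dist n (vtx n p x) (vtx n p y) = y - x"
proof -
  have "int ((p + y) mod n + n - (p + x) mod n) = int ((p + y) mod n) + int n - int ((p + x) mod n)"
    using mod_less_divisor[OF assms(1), of "p + x"] by (simp add: of_nat_diff)
  then have "int ((p + y) mod n + n - (p + x) mod n) mod int n
      = ((int p + int y) mod int n + int n - (int p + int x) mod int n) mod int n"
    by (simp add: zmod_int)
  also have "\<dots> = ((int p + int y) - (int p + int x)) mod int n"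
    by (metis mod_add_self2 mod_diff_cong mod_mod_trivial)
  also have "\<dots> = int ((y - x) mod n)"
    using assms by (simp add: zmod_int of_nat_diff)
  finally have "((p + y) mod n + n - (p + x) mod n) mod n = (y - x) mod n"
    by (metis of_nat_eq_iff zmod_int)
  then show ?thesis
    using assms by (simp add: ccw_dist_def vtx_def)
qed

lemma image_vtx_offsets: "{vtx n p (x + i) | i. P i} = vtx n p ` {x + i | i. P i}"
  by blast

lemma bd_edges_vtx:
  assumes "0 < n" "x \<le> y" "y - x < n"
  shows "bd_edges n (vtx n p x) (vtx n p y) = vtx n p ` {x..<y}"
proof -
  have "z \<in> {x + i | i. i < y - x}" if "z \<in> {x..<y}" for z
    using that by (intro CollectI exI[of _ "z - x"]) auto
  then have "{x + i | i. i < y - x} = {x..<y}"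
    by auto
  then show ?thesis
    unfolding bd_edges_def ccw_dist_vtx[OF assms] vtx_add[symmetric] image_vtx_offsets by simp
qed

lemma bd_inner_vtx:
  assumes "0 < n" "x \<le> y" "y - x < n"
  shows "bd_inner n (vtx n p x) (vtx n p y) = vtx n p ` {x<..<y}"
proof -
  have "z \<in> {x + i | i. 0 < i \<and> i < y - x}" if "z \<in> {x<..<y}" for z
    using that by (intro CollectI exI[of _ "z - x"]) auto
  then have "{x + i | i. 0 < i \<and> i < y - x} = {x<..<y}"
    by auto
  then show ?thesis
    unfolding bd_inner_def ccw_dist_vtx[OF assms] vtx_add[symmetric] image_vtx_offsets by simp
qed

lemma inj_on_image_subset_iff:
  assumes "inj_on f C" "A \<subseteq> C" "B \<subseteq> C"
  shows "f ` A \<subseteq> f ` B \<longleftrightarrow> A \<subseteq> B"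
  using inj_on_image_mem_iff[OF assms(1) _ assms(3)] assms(2) by blast

fun nested_or_disjoint :: "nat \<times> nat \<Rightarrow> nat \<times> nat \<Rightarrow> bool" where
  "nested_or_disjoint (x, y) (x', y') =
     ((x' \<le> x \<and> y \<le> y') \<or> (x \<le> x' \<and> y' \<le> y) \<or> y \<le> x' \<or> y' \<le> x)"

lemma nested_or_disjoint_sym: "nested_or_disjoint P Q = nested_or_disjoint Q P"
  by (cases P; cases Q) auto

definition laminar :: "(nat \<times> nat) set \<Rightarrow> bool" where
  "laminar A = (\<forall>P\<in>A. \<forall>Q\<in>A. nested_or_disjoint P Q)"

lemma laminar_subset: "laminar A \<Longrightarrow> B \<subseteq> A \<Longrightarrow> laminar B"
  unfolding laminar_def by blast

lemma crosses_Bd_vtx_iff: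
  assumes "0 < n" "x < y" "y \<le> n" "y - x < n" "x' < y'" "y' \<le> n" "y' - x' < n"
  shows "crosses n (Bd (vtx n p x) (vtx n p y)) (Bd (vtx n p x') (vtx n p y'))
    \<longleftrightarrow> \<not> nested_or_disjoint (x, y) (x', y')"
proof -
  have sub: "{x..<y} \<subseteq> {..<n}" "{x'..<y'} \<subseteq> {..<n}"
    using assms by auto
  have "{x..<y} \<inter> {x'..<y'} = {} \<longleftrightarrow> y \<le> x' \<or> y' \<le> x"
  proof
    assume "{x..<y} \<inter> {x'..<y'} = {}"
    then have "max x x' \<notin> {x..<y} \<inter> {x'..<y'}" by blast
    then show "y \<le> x' \<or> y' \<le> x" using assms(2,5) by auto
  qed auto
  then show ?thesis
    using assms(2,5)
    unfolding crosses.simps bd_edges_vtx[OF assms(1) less_imp_le[OF assms(2)] assms(4)]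
      bd_edges_vtx[OF assms(1) less_imp_le[OF assms(5)] assms(7)]
      inj_on_image_subset_iff[OF inj_on_vtx sub] inj_on_image_subset_iff[OF inj_on_vtx sub(2,1)]
      inj_on_image_Int[OF inj_on_vtx sub, symmetric] image_is_empty
    by auto
qed

lemma crosses_Bd_Pu_vtx_iff:
  assumes "0 < n" "x < y" "y \<le> n" "y - x < n" "q < n"
  shows "crosses n (Bd (vtx n p x) (vtx n p y)) (Pu (vtx n p q) e) \<longleftrightarrow> x < q \<and> q < y"
proof -
  have "vtx n p q \<in> vtx n p ` {x<..<y} \<longleftrightarrow> q \<in> {x<..<y}"
    by (rule inj_on_image_mem_iff[OF inj_on_vtx]) (use assms in auto)
  then show ?thesis
    using assms by (simp add: bd_inner_vtx)
qed

lemma vtx_pair_inj: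
  assumes "x < y" "y \<le> n" "x' < y'" "y' \<le> n"
    and "vtx n p x = vtx n p x'" "vtx n p y = vtx n p y'"
  shows "x = x' \<and> y = y'"
proof
  show "x = x'"
    using assms vtx_inj[of x n x' p] by auto
  have "y mod n = y' mod n"
    using assms vtx_inj[of "y mod n" n "y' mod n" p] by (simp add: vtx_def mod_add_right_eq)
  then show "y = y'"
    using assms by (cases "y = n"; cases "y' = n") auto
qed

section \<open>Interval families of forests\<close>

text \<open>A full binary tree t placed on the offsets a, ..., a + leaves t is the dual tree of a
  triangulation of that polygon: an inner node spanning the offsets x to y is the triangle on the
  side (x, y). The spokes of a forest are the offsets where its trees meet, i.e. the ends of the
  puncture arcs.\<close>
fun tree_ivs :: "fbt \<Rightarrow> nat \<Rightarrow> (nat \<times> nat) set" where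
  "tree_ivs Lf a = {}"
| "tree_ivs (Nd l r) a =
     insert (a, a + leaves l + leaves r) (tree_ivs l a \<union> tree_ivs r (a + leaves l))"

fun forest_ivs :: "fbt list \<Rightarrow> nat \<Rightarrow> (nat \<times> nat) set" where
  "forest_ivs [] a = {}"
| "forest_ivs (t # ts) a = tree_ivs t a \<union> forest_ivs ts (a + leaves t)"

fun spokes :: "fbt list \<Rightarrow> nat \<Rightarrow> nat list" where
  "spokes [] a = []"
| "spokes (t # ts) a = a # spokes ts (a + leaves t)"

abbreviation forest_leaves :: "fbt list \<Rightarrow> nat" where
  "forest_leaves ts \<equiv> sum_list (map leaves ts)"

lemma leaves_ge_1: "1 \<le> leaves t"
  by (induction t) auto

lemma length_le_forest_leaves: "length ts \<le> forest_leaves ts"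
proof (induction ts)
  case (Cons t ts)
  then show ?case using leaves_ge_1[of t] by simp
qed simp

lemma tree_ivs_bounds: "(x, y) \<in> tree_ivs t a \<Longrightarrow> a \<le> x \<and> x + 2 \<le> y \<and> y \<le> a + leaves t"
proof (induction t arbitrary: a)
  case (Nd l r)
  with leaves_ge_1[of l] leaves_ge_1[of r] show ?case by (auto dest!: Nd.IH)
qed simp

lemma finite_tree_ivs: "finite (tree_ivs t a)"
  by (induction t arbitrary: a) auto

lemma card_tree_ivs: "card (tree_ivs t a) = leaves t - 1"
proof (induction t arbitrary: a)
  case (Nd l r)
  have "tree_ivs l a \<inter> tree_ivs r (a + leaves l) = {}"
       "(a, a + leaves l + leaves r) \<notin> tree_ivs l a \<union> tree_ivs r (a + leaves l)"
    using tree_ivs_bounds[of _ _ l a] tree_ivs_bounds[of _ _ r "a + leaves l"]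
      leaves_ge_1[of l] leaves_ge_1[of r] by fastforce+
  then show ?case
    using Nd.IH leaves_ge_1[of l] leaves_ge_1[of r] by (simp add: card_Un_disjoint finite_tree_ivs)
qed simp

lemma laminar_tree_ivs: "laminar (tree_ivs t a)"
  unfolding laminar_def
proof (induction t arbitrary: a)
  case (Nd l r)
  let ?top = "(a, a + leaves l + leaves r)"
  have top: "nested_or_disjoint ?top R" if "R \<in> tree_ivs (Nd l r) a" for R
    using that tree_ivs_bounds[of "fst R" "snd R" "Nd l r" a] by (cases R) auto
  have lr: "nested_or_disjoint R1 R2"
    if "R1 \<in> tree_ivs l a" "R2 \<in> tree_ivs r (a + leaves l)" for R1 R2
    using that tree_ivs_bounds[of "fst R1" "snd R1" l a]
      tree_ivs_bounds[of "fst R2" "snd R2" r "a + leaves l"]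
    by (cases R1; cases R2) auto
  show ?case
  proof (intro ballI)
    fix P Q assume PQ: "P \<in> tree_ivs (Nd l r) a" "Q \<in> tree_ivs (Nd l r) a"
    then consider "P = ?top \<or> Q = ?top" | "P \<in> tree_ivs l a \<union> tree_ivs r (a + leaves l)"
        "Q \<in> tree_ivs l a \<union> tree_ivs r (a + leaves l)"
      by auto
    then show "nested_or_disjoint P Q"
    proof cases
      case 1
      then show ?thesis using top PQ nested_or_disjoint_sym by metis
    next
      case 2
      then show ?thesis using lr Nd.IH nested_or_disjoint_sym by (metis Un_iff)
    qed
  qed
qed simp

lemma tree_ivs_top: "2 \<le> leaves t \<Longrightarrow> (a, a + leaves t) \<in> tree_ivs t a"
  by (cases t) auto

lemma length_spokes [simp]: "length (spokes ts a) = length ts"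
  by (induction ts arbitrary: a) auto

lemma spokes_bounds: "q \<in> set (spokes ts a) \<Longrightarrow> a \<le> q \<and> q < a + forest_leaves ts"
proof (induction ts arbitrary: a)
  case (Cons t ts)
  with leaves_ge_1[of t] show ?case by (auto dest!: Cons.IH)
qed simp

lemma sorted_spokes: "sorted_wrt (<) (spokes ts a)"
proof (induction ts arbitrary: a)
  case (Cons t ts)
  with leaves_ge_1[of t] show ?case by (auto dest!: spokes_bounds)
qed simp

lemma card_spokes: "card (set (spokes ts a)) = length ts"
  using sorted_spokes[of ts a] by (simp add: strict_sorted_iff distinct_card)

lemma nth_spokes: "i < length ts \<Longrightarrow> spokes ts a ! i = a + forest_leaves (take i ts)"
proof (induction ts arbitrary: a i)
  case (Cons t ts)
  then show ?case by (cases i) auto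
qed simp

lemma spokes_single: "length ts = 1 \<Longrightarrow> set (spokes ts a) = {a}"
  by (cases ts) auto

lemma forest_ivs_bounds:
  "(x, y) \<in> forest_ivs ts a \<Longrightarrow> a \<le> x \<and> x + 2 \<le> y \<and> y \<le> a + forest_leaves ts"
proof (induction ts arbitrary: a)
  case (Cons t ts)
  then show ?case using tree_ivs_bounds[of x y t a] by (auto dest!: Cons.IH)
qed simp

lemma finite_forest_ivs: "finite (forest_ivs ts a)"
  by (induction ts arbitrary: a) (auto simp: finite_tree_ivs)

lemma card_forest_ivs: "card (forest_ivs ts a) = forest_leaves ts - length ts"
proof (induction ts arbitrary: a)
  case (Cons t ts)
  have "tree_ivs t a \<inter> forest_ivs ts (a + leaves t) = {}"
    using tree_ivs_bounds[of _ _ t a] forest_ivs_bounds[of _ _ ts "a + leaves t"] by fastforce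
  then show ?case
    using Cons.IH card_tree_ivs leaves_ge_1[of t] length_le_forest_leaves[of ts]
    by (simp add: card_Un_disjoint finite_tree_ivs finite_forest_ivs)
qed simp

lemma laminar_forest_ivs: "laminar (forest_ivs ts a)"
proof (induction ts arbitrary: a)
  case (Cons t ts)
  have "nested_or_disjoint R1 R2" if "R1 \<in> tree_ivs t a" "R2 \<in> forest_ivs ts (a + leaves t)" for R1 R2
    using that tree_ivs_bounds[of "fst R1" "snd R1" t a]
      forest_ivs_bounds[of "fst R2" "snd R2" ts "a + leaves t"]
    by (cases R1; cases R2) auto
  then show ?case
    using Cons.IH laminar_tree_ivs[of t a] nested_or_disjoint_sym unfolding laminar_def
    by (metis Un_iff forest_ivs.simps(2))
qed (simp add: laminar_def)

lemma forest_ivs_avoid_spokes: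
  "(x, y) \<in> forest_ivs ts a \<Longrightarrow> q \<in> set (spokes ts a) \<Longrightarrow> \<not> (x < q \<and> q < y)"
proof (induction ts arbitrary: a)
  case (Cons t ts)
  then show ?case
    using tree_ivs_bounds[of x y t a] forest_ivs_bounds[of x y ts "a + leaves t"]
      spokes_bounds[of q ts "a + leaves t"]
    by auto
qed simp

lemma tree_ivs_nth_subset:
  "i < length ts \<Longrightarrow> tree_ivs (ts ! i) (spokes ts a ! i) \<subseteq> forest_ivs ts a"
proof (induction ts arbitrary: a i)
  case (Cons t ts)
  then show ?case by (cases i) auto
qed simp

lemma laminar_split_point:
  assumes ij: "i + 2 \<le> j" and A: "\<forall>(x, y)\<in>A. i \<le> x \<and> x + 2 \<le> y \<and> y \<le> j \<and> (x, y) \<noteq> (i, j)"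
    and lam: "laminar A"
  shows "\<exists>v. i < v \<and> v < j \<and> (\<forall>(x, y)\<in>A. y \<le> v \<or> v \<le> x)"
proof (cases "\<exists>y. (i, y) \<in> A")
  case True
  define Y where "Y = {y. (i, y) \<in> A}"
  have "finite Y" "Y \<noteq> {}"
    using True A by (auto simp: Y_def intro: finite_subset[of _ "{..j}"])
  then have v: "(i, Max Y) \<in> A" and v_max: "\<And>y. (i, y) \<in> A \<Longrightarrow> y \<le> Max Y"
    by (auto simp: Y_def dest: Max_in)
  have "y \<le> Max Y \<or> Max Y \<le> x" if "(x, y) \<in> A" for x y
    using lam v that A v_max[of y] unfolding laminar_def
    by (cases "x = i") (fastforce+)
  moreover have "i < Max Y" "Max Y < j"
    using A v by fastforce+
  ultimately show ?thesis by blast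
next
  case False
  then have "\<forall>(x, y)\<in>A. y \<le> i + 1 \<or> i + 1 \<le> x"
    using A by (auto simp: Suc_le_eq order.order_iff_strict)
  then show ?thesis using ij by (intro exI[of _ "i + 1"]) auto
qed

lemma laminar_in_tree_ivs:
  "i < j \<Longrightarrow> \<forall>(x, y)\<in>A. i \<le> x \<and> x + 2 \<le> y \<and> y \<le> j \<Longrightarrow> laminar A
   \<Longrightarrow> \<exists>t. leaves t = j - i \<and> A \<subseteq> tree_ivs t i"
proof (induction "j - i" arbitrary: i j A rule: less_induct)
  case less
  show ?case
  proof (cases "j = i + 1")
    case True
    then have "A = {}" using less.prems(2) by fastforce
    with True show ?thesis by (intro exI[of _ Lf]) auto
  next
    case False
    then have ij: "i + 2 \<le> j" using less.prems(1) by simp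
    define A0 where "A0 = A - {(i, j)}"
    have "laminar A0"
      using less.prems(3) by (rule laminar_subset) (simp add: A0_def)
    moreover have "\<forall>(x, y)\<in>A0. i \<le> x \<and> x + 2 \<le> y \<and> y \<le> j \<and> (x, y) \<noteq> (i, j)"
      using less.prems(2) by (auto simp: A0_def)
    ultimately obtain v where v: "i < v" "v < j" "\<forall>(x, y)\<in>A0. y \<le> v \<or> v \<le> x"
      using laminar_split_point[OF ij] by blast
    define A1 where "A1 = {(x, y) \<in> A0. y \<le> v}"
    define A2 where "A2 = {(x, y) \<in> A0. v \<le> x}"
    have "laminar A1" "laminar A2"
      using \<open>laminar A0\<close> by (rule laminar_subset, auto simp: A1_def A2_def)+
    moreover have "\<forall>(x, y)\<in>A1. i \<le> x \<and> x + 2 \<le> y \<and> y \<le> v"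
      "\<forall>(x, y)\<in>A2. v \<le> x \<and> x + 2 \<le> y \<and> y \<le> j"
      using less.prems(2) by (auto simp: A1_def A2_def A0_def)
    moreover have "v - i < j - i" "j - v < j - i"
      using v by auto
    ultimately obtain l r where l: "leaves l = v - i" "A1 \<subseteq> tree_ivs l i"
      and r: "leaves r = j - v" "A2 \<subseteq> tree_ivs r v"
      using less.hyps[of v i A1] less.hyps[of j v A2] v by blast
    have "A \<subseteq> insert (i, j) (A1 \<union> A2)"
      using v(3) unfolding A1_def A2_def A0_def by auto
    also have "\<dots> \<subseteq> tree_ivs (Nd l r) i"
      using l r v by auto
    finally show ?thesis
      using l(1) r(1) v by (intro exI[of _ "Nd l r"]) auto
  qed
qed

lemma laminar_in_forest_ivs:
  "finite Q \<Longrightarrow> a \<in> Q \<Longrightarrow> Q \<subseteq> {a..<b} \<Longrightarrow> \<forall>(x, y)\<in>A. a \<le> x \<and> x + 2 \<le> y \<and> y \<le> b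
   \<Longrightarrow> laminar A \<Longrightarrow> \<forall>(x, y)\<in>A. \<forall>q\<in>Q. \<not> (x < q \<and> q < y)
   \<Longrightarrow> \<exists>ts. forest_leaves ts = b - a \<and> set (spokes ts a) = Q \<and> A \<subseteq> forest_ivs ts a"
proof (induction "card Q" arbitrary: a Q A rule: less_induct)
  case less
  have ab: "a < b" using less.prems(2,3) by auto
  show ?case
  proof (cases "Q = {a}")
    case True
    obtain t where t: "leaves t = b - a" "A \<subseteq> tree_ivs t a"
      using laminar_in_tree_ivs[OF ab less.prems(4,5)] by blast
    then show ?thesis using True by (intro exI[of _ "[t]"]) auto
  next
    case False
    define Q' where "Q' = Q - {a}"
    have Q': "finite Q'" "Q' \<noteq> {}" "card Q' < card Q"
      using False less.prems(1,2) card_Diff1_less[OF less.prems(1,2)] by (auto simp: Q'_def)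
    define q where "q = Min Q'"
    have q: "q \<in> Q'" "\<And>z. z \<in> Q' \<Longrightarrow> q \<le> z"
      using Min_in[OF Q'(1,2)] Min_le[OF Q'(1)] by (auto simp: q_def)
    have "z \<in> {q..<b}" if "z \<in> Q'" for z
      using q(2)[OF that] that less.prems(3) by (auto simp: Q'_def)
    then have q_bounds: "a < q" "q < b" "Q' \<subseteq> {q..<b}"
      using q(1) less.prems(3) unfolding subset_iff by (auto simp: Q'_def)
    define A1 where "A1 = {(x, y) \<in> A. y \<le> q}"
    define A2 where "A2 = {(x, y) \<in> A. q \<le> x}"
    have "A \<subseteq> A1 \<union> A2"
      using less.prems(6) q(1) unfolding A1_def A2_def Q'_def by fastforce
    have "laminar A1" "laminar A2"
      using less.prems(5) by (rule laminar_subset, auto simp: A1_def A2_def)+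
    moreover have "\<forall>(x, y)\<in>A1. a \<le> x \<and> x + 2 \<le> y \<and> y \<le> q"
      "\<forall>(x, y)\<in>A2. q \<le> x \<and> x + 2 \<le> y \<and> y \<le> b"
      "\<forall>(x, y)\<in>A2. \<forall>z\<in>Q'. \<not> (x < z \<and> z < y)"
      using less.prems(4,6) by (auto simp: A1_def A2_def Q'_def)
    ultimately obtain t ts where t: "leaves t = q - a" "A1 \<subseteq> tree_ivs t a"
      and ts: "forest_leaves ts = b - q" "set (spokes ts q) = Q'" "A2 \<subseteq> forest_ivs ts q"
      using laminar_in_tree_ivs[OF q_bounds(1), of A1] less.hyps[OF Q'(3) Q'(1) q(1) q_bounds(3)]
      by blast
    have "a + leaves t = q"
      using t(1) q_bounds by simp
    then show ?thesis
      using t ts q_bounds \<open>A \<subseteq> A1 \<union> A2\<close> less.prems(2)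
      by (intro exI[of _ "t # ts"]) (auto simp: Q'_def)
  qed
qed

section \<open>The triangulation of a forest\<close>

text \<open>The interval (0, n) of a single root subtree is the loop around the puncture; in a
  triangulation it is represented by the two tagged puncture arcs at the base vertex.\<close>
definition bd_ivs :: "nat \<Rightarrow> fbt list \<Rightarrow> (nat \<times> nat) set" where
  "bd_ivs n ts = {(x, y) \<in> forest_ivs ts 0. y - x < n}"

definition bd_arcs :: "nat \<Rightarrow> nat \<Rightarrow> (nat \<times> nat) set \<Rightarrow> tarc set" where
  "bd_arcs n p A = (\<lambda>(x, y). Bd (vtx n p x) (vtx n p y)) ` A"

definition pu_arcs :: "nat \<Rightarrow> fbt list \<Rightarrow> nat \<Rightarrow> bool \<Rightarrow> tarc set" where
  "pu_arcs n ts p e =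
     {Pu (vtx n p q) e' | q e'. q \<in> set (spokes ts 0) \<and> (e' = e \<or> length ts = 1)}"

text \<open>With a single spoke both tags occur, forming the self-folded triangle.\<close>
definition tri_of :: "nat \<Rightarrow> fbt list \<Rightarrow> nat \<Rightarrow> bool \<Rightarrow> tarc set" where
  "tri_of n ts p e = pu_arcs n ts p e \<union> bd_arcs n p (bd_ivs n ts)"

lemma Btrees_forest_leaves: "2 \<le> n \<Longrightarrow> ts \<in> Btrees n \<longleftrightarrow> forest_leaves ts = n \<and> ts \<noteq> []"
  unfolding Btrees_def root_leaves_def by auto

lemma bd_ivs_bounds:
  "forest_leaves ts = n \<Longrightarrow> (x, y) \<in> bd_ivs n ts \<Longrightarrow> x + 2 \<le> y \<and> y \<le> n \<and> y - x < n"
  unfolding bd_ivs_def using forest_ivs_bounds[of x y ts 0] by auto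

lemma laminar_bd_ivs: "laminar (bd_ivs n ts)"
  using laminar_forest_ivs by (rule laminar_subset) (auto simp: bd_ivs_def)

lemma spokes_less: "forest_leaves ts = n \<Longrightarrow> q \<in> set (spokes ts 0) \<Longrightarrow> q < n"
  using spokes_bounds[of q ts 0] by simp

lemma full_interval_in_forest_ivs:
  assumes "forest_leaves ts = n" "(0, n) \<in> forest_ivs ts 0"
  shows "length ts = 1"
proof (cases ts)
  case (Cons t ts')
  then have "(0, n) \<in> tree_ivs t 0"
    using assms(2) forest_ivs_bounds[of 0 n ts' "leaves t"] leaves_ge_1[of t] by auto
  then have "n \<le> leaves t"
    using tree_ivs_bounds[of 0 n t 0] by simp
  moreover have "leaves t + forest_leaves ts' = n"
    using assms(1) Cons by simp
  ultimately have "length ts' = 0"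
    using length_le_forest_leaves[of ts'] by linarith
  then have "ts' = []"
    by simp
  then show ?thesis
    using Cons by simp
qed (use assms in simp)

lemma bd_ivs_eq: "forest_leaves ts = n \<Longrightarrow> bd_ivs n ts = forest_ivs ts 0 - {(0, n)}"
  unfolding bd_ivs_def using forest_ivs_bounds[of _ _ ts 0] by fastforce

lemma bd_ivs_eq_forest_ivs:
  "forest_leaves ts = n \<Longrightarrow> length ts \<noteq> 1 \<Longrightarrow> bd_ivs n ts = forest_ivs ts 0"
  using bd_ivs_eq full_interval_in_forest_ivs by blast

lemma card_bd_ivs:
  assumes "2 \<le> n" "forest_leaves ts = n"
  shows "card (bd_ivs n ts) = (if length ts = 1 then n - 2 else n - length ts)"
proof (cases "length ts = 1")
  case True
  then obtain t where "ts = [t]" "leaves t = n"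
    using assms(2) by (cases ts) auto
  then have "(0, n) \<in> forest_ivs ts 0"
    using tree_ivs_top[of t 0] assms(1) by simp
  then show ?thesis
    using True assms bd_ivs_eq[OF assms(2)] card_forest_ivs[of ts 0] finite_forest_ivs
    by (simp add: card_Diff_singleton)
next
  case False
  then show ?thesis
    using assms bd_ivs_eq_forest_ivs[OF assms(2) False] card_forest_ivs[of ts 0] by simp
qed

lemma Bd_vtx_in_bd_arcs_iff:
  assumes "forest_leaves ts = n" "x < y" "y \<le> n"
  shows "Bd (vtx n p x) (vtx n p y) \<in> bd_arcs n p (bd_ivs n ts) \<longleftrightarrow> (x, y) \<in> bd_ivs n ts"
proof
  assume "Bd (vtx n p x) (vtx n p y) \<in> bd_arcs n p (bd_ivs n ts)"
  then obtain x' y' where "(x', y') \<in> bd_ivs n ts" "vtx n p x = vtx n p x'" "vtx n p y = vtx n p y'"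
    unfolding bd_arcs_def by auto
  then show "(x, y) \<in> bd_ivs n ts"
    using assms bd_ivs_bounds[of ts n x' y'] vtx_pair_inj[of x y n x' y' p] by auto
qed (force simp: bd_arcs_def)

lemma card_bd_arcs:
  assumes "forest_leaves ts = n"
  shows "card (bd_arcs n p (bd_ivs n ts)) = card (bd_ivs n ts)"
  unfolding bd_arcs_def
proof (rule card_image, rule inj_onI)
  fix P Q assume "P \<in> bd_ivs n ts" "Q \<in> bd_ivs n ts"
    "(\<lambda>(x, y). Bd (vtx n p x) (vtx n p y)) P = (\<lambda>(x, y). Bd (vtx n p x) (vtx n p y)) Q"
  moreover obtain x y x' y' where "P = (x, y)" "Q = (x', y')"
    by force
  ultimately show "P = Q"
    using bd_ivs_bounds[OF assms, of x y] bd_ivs_bounds[OF assms, of x' y']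
      vtx_pair_inj[of x y n x' y' p] by auto
qed

lemma card_pu_arcs:
  assumes "forest_leaves ts = n"
  shows "card (pu_arcs n ts p e) = (if length ts = 1 then 2 else length ts)"
proof (cases "length ts = 1")
  case True
  then have "pu_arcs n ts p e = {Pu (vtx n p 0) e, Pu (vtx n p 0) (\<not> e)}"
    unfolding pu_arcs_def using spokes_single[OF True, of 0] by auto
  then show ?thesis using True by simp
next
  case False
  then have "pu_arcs n ts p e = (\<lambda>q. Pu (vtx n p q) e) ` set (spokes ts 0)"
    unfolding pu_arcs_def by auto
  moreover have "inj_on (\<lambda>q. Pu (vtx n p q) e) (set (spokes ts 0))"
    by (intro inj_onI) (use spokes_less[OF assms(1)] vtx_inj in blast)
  ultimately show ?thesis
    using False card_spokes[of ts 0] by (simp add: card_image)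
qed

lemma card_tri_of:
  assumes "2 \<le> n" "ts \<in> Btrees n"
  shows "card (tri_of n ts p e) = n"
proof -
  have ts: "forest_leaves ts = n" "ts \<noteq> []"
    using assms Btrees_forest_leaves by auto
  have "pu_arcs n ts p e \<inter> bd_arcs n p (bd_ivs n ts) = {}"
    unfolding pu_arcs_def bd_arcs_def by auto
  moreover have "finite (pu_arcs n ts p e)"
    using card_pu_arcs[OF ts(1), of p e] by (intro card_ge_0_finite) (simp add: ts(2))
  moreover have "finite (bd_arcs n p (bd_ivs n ts))"
    unfolding bd_arcs_def bd_ivs_def
    by (intro finite_imageI finite_subset[OF _ finite_forest_ivs[of ts 0]]) auto
  ultimately show ?thesis
    using assms(1) card_pu_arcs[OF ts(1)] card_bd_arcs[OF ts(1)] card_bd_ivs[OF assms(1) ts(1)]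
      length_le_forest_leaves[of ts] ts
    by (auto simp: tri_of_def card_Un_disjoint)
qed

lemma tri_of_subset_tagged_diags:
  assumes "2 \<le> n" "forest_leaves ts = n"
  shows "tri_of n ts p e \<subseteq> tagged_diags n"
proof
  fix X assume "X \<in> tri_of n ts p e"
  then consider (Pu) q e' where "X = Pu (vtx n p q) e'"
    | (Bd) x y where "X = Bd (vtx n p x) (vtx n p y)" "(x, y) \<in> bd_ivs n ts"
    unfolding tri_of_def pu_arcs_def bd_arcs_def by auto
  then show "X \<in> tagged_diags n"
  proof cases
    case Pu
    then show ?thesis using assms vtx_less[of n] unfolding tagged_diags_def by auto
  next
    case Bd
    have xy: "x + 2 \<le> y" "y \<le> n" "y - x < n"
      using bd_ivs_bounds[OF assms(2) Bd(2)] by auto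
    then have "vtx n p x \<noteq> vtx n p y"
      using vtx_pair_inj[of x y n 0 y p] vtx_pair_inj[of x y n x y p] vtx_self[of n p]
        vtx_inj[of x n y p] by (cases "y = n") auto
    moreover have "ccw_dist n (vtx n p x) (vtx n p y) = y - x"
      using ccw_dist_vtx[of n x y p] xy assms by simp
    ultimately show ?thesis
      using Bd xy assms vtx_less[of n] unfolding tagged_diags_def by auto
  qed
qed

lemma noncrossing_tri_of:
  assumes "2 \<le> n" "forest_leaves ts = n"
  shows "noncrossing n (tri_of n ts p e)"
proof -
  have n: "0 < n" using assms by simp
  have PP: "\<not> crosses n (Pu (vtx n p q) e1) (Pu (vtx n p q') e2)"
    if "q \<in> set (spokes ts 0)" "q' \<in> set (spokes ts 0)"
      "e1 = e \<or> length ts = 1" "e2 = e \<or> length ts = 1" for q q' e1 e2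
    using that spokes_single[of ts 0] by (cases "length ts = 1") auto
  have BP: "\<not> crosses n (Bd (vtx n p x) (vtx n p y)) (Pu (vtx n p q) e1)"
    if "(x, y) \<in> bd_ivs n ts" "q \<in> set (spokes ts 0)" for x y q e1
    using that bd_ivs_bounds[OF assms(2) that(1)] spokes_less[OF assms(2) that(2)]
      crosses_Bd_Pu_vtx_iff[OF n] forest_ivs_avoid_spokes[of x y ts 0 q]
    by (auto simp: bd_ivs_def)
  have BB: "\<not> crosses n (Bd (vtx n p x) (vtx n p y)) (Bd (vtx n p x') (vtx n p y'))"
    if "(x, y) \<in> bd_ivs n ts" "(x', y') \<in> bd_ivs n ts" for x y x' y'
  proof -
    have "x < y" "y \<le> n" "y - x < n" "x' < y'" "y' \<le> n" "y' - x' < n"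
      using bd_ivs_bounds[OF assms(2) that(1)] bd_ivs_bounds[OF assms(2) that(2)] by auto
    moreover have "nested_or_disjoint (x, y) (x', y')"
      using laminar_bd_ivs[of n ts] that unfolding laminar_def by blast
    ultimately show ?thesis
      using crosses_Bd_vtx_iff[OF n] by blast
  qed
  have cases: "(\<exists>q e'. Z = Pu (vtx n p q) e' \<and> q \<in> set (spokes ts 0) \<and> (e' = e \<or> length ts = 1))
      \<or> (\<exists>x y. Z = Bd (vtx n p x) (vtx n p y) \<and> (x, y) \<in> bd_ivs n ts)"
    if "Z \<in> tri_of n ts p e" for Z
    using that unfolding tri_of_def pu_arcs_def bd_arcs_def by auto
  have crosses_sym: "crosses n (Pu c e') (Bd a b) = crosses n (Bd a b) (Pu c e')" for c e' a b
    by simp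
  show ?thesis
    unfolding noncrossing_def
  proof (intro ballI)
    fix X Y assume "X \<in> tri_of n ts p e" "Y \<in> tri_of n ts p e"
    from cases[OF this(1)] cases[OF this(2)] show "\<not> crosses n X Y"
      by (elim disjE exE conjE) (simp_all add: crosses_sym PP BP BB del: crosses.simps)
  qed
qed

section \<open>Triangulations are the triangulations of forests\<close>

lemma Bd_vtx_offsets:
  assumes "0 < n" "a < n" "b < n" "c < n" "c \<notin> bd_inner n a b"
  obtains x where "a = vtx n c x" "b = vtx n c (x + ccw_dist n a b)" "x + ccw_dist n a b \<le> n"
proof
  define x where "x = (a + n - c) mod n"
  show a: "a = vtx n c x" and b: "b = vtx n c (x + ccw_dist n a b)"
    using vtx_offset[OF assms(2,4)] vtx_offset_ccw_dist[OF assms(2-4)] by (simp_all add: x_def)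
  show "x + ccw_dist n a b \<le> n"
  proof (rule ccontr)
    assume "\<not> ?thesis"
    moreover have "x < n"
      using assms(1) by (simp add: x_def)
    moreover have "(a + (n - x)) mod n = c"
      using vtx_add[of n c x "n - x"] a \<open>x < n\<close> assms(4) by (simp add: vtx_def)
    ultimately have "c \<in> bd_inner n a b"
      unfolding bd_inner_def by (intro CollectI exI[of _ "n - x"]) auto
    then show False
      using assms(5) by simp
  qed
qed

lemma noncrossing_opposite_tags:
  assumes "noncrossing n S" "Pu c e \<in> S" "Pu c' (\<not> e) \<in> S" "Pu a e' \<in> S"
  shows "a = c"
proof -
  have nc: "\<And>X Y. X \<in> S \<Longrightarrow> Y \<in> S \<Longrightarrow> \<not> crosses n X Y"
    using assms(1) unfolding noncrossing_def by blast
  have "c' = c"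
    using nc[OF assms(2,3)] by auto
  then show ?thesis
    using nc[OF assms(4,2)] nc[OF assms(4,3)] by (cases "e' = e") auto
qed

definition spoke_offsets :: "nat \<Rightarrow> nat \<Rightarrow> tarc set \<Rightarrow> nat set" where
  "spoke_offsets n c S = {q. q < n \<and> (\<exists>e. Pu (vtx n c q) e \<in> S)}"

definition arc_ivs :: "nat \<Rightarrow> nat \<Rightarrow> tarc set \<Rightarrow> (nat \<times> nat) set" where
  "arc_ivs n c S = {(x, y). x + 2 \<le> y \<and> y \<le> n \<and> y - x < n \<and> Bd (vtx n c x) (vtx n c y) \<in> S}"

lemma laminar_arc_ivs:
  assumes "0 < n" "noncrossing n S"
  shows "laminar (arc_ivs n c S)"
  unfolding laminar_def
proof clarify
  fix x y x' y' assume "(x, y) \<in> arc_ivs n c S" "(x', y') \<in> arc_ivs n c S"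
  then have "x < y" "y \<le> n" "y - x < n" "x' < y'" "y' \<le> n" "y' - x' < n"
    and "Bd (vtx n c x) (vtx n c y) \<in> S" "Bd (vtx n c x') (vtx n c y') \<in> S"
    by (auto simp: arc_ivs_def)
  moreover from this(7,8) have "\<not> crosses n (Bd (vtx n c x) (vtx n c y)) (Bd (vtx n c x') (vtx n c y'))"
    using assms(2) unfolding noncrossing_def by blast
  ultimately show "nested_or_disjoint (x, y) (x', y')"
    using crosses_Bd_vtx_iff[OF assms(1)] by blast
qed

lemma arc_ivs_avoid_spoke_offsets:
  assumes "0 < n" "noncrossing n S" "(x, y) \<in> arc_ivs n c S" "q \<in> spoke_offsets n c S"
  shows "\<not> (x < q \<and> q < y)"
proof
  assume "x < q \<and> q < y"
  moreover obtain e where "Bd (vtx n c x) (vtx n c y) \<in> S" "Pu (vtx n c q) e \<in> S"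
    "y \<le> n" "y - x < n" "q < n"
    using assms(3,4) by (auto simp: arc_ivs_def spoke_offsets_def)
  ultimately show False
    using assms(2) crosses_Bd_Pu_vtx_iff[OF assms(1), of x y q c e] unfolding noncrossing_def
    by (meson less_trans)
qed

lemma spoke_offsets_opposite_tags:
  assumes "0 < n" "c < n" "noncrossing n S" "Pu c e \<in> S" "Pu a (\<not> e) \<in> S"
  shows "spoke_offsets n c S \<subseteq> {0}"
proof
  fix z assume "z \<in> spoke_offsets n c S"
  then obtain e' where "Pu (vtx n c z) e' \<in> S" "z < n"
    by (auto simp: spoke_offsets_def)
  then have "vtx n c z = c"
    by (intro noncrossing_opposite_tags[OF assms(3-5)]) simp
  then have "vtx n c z = vtx n c 0"
    using assms(2) by (simp add: vtx_def)
  then show "z \<in> {0}"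
    using vtx_inj[of z n 0 c] \<open>z < n\<close> assms(1) by simp
qed

lemma noncrossing_subset_tri_of:
  assumes n: "2 \<le> n" and S: "S \<subseteq> tagged_diags n" "noncrossing n S" and c: "Pu c e \<in> S"
  shows "\<exists>ts\<in>Btrees n. S \<subseteq> tri_of n ts c e"
proof -
  have n0: "0 < n" and cn: "c < n"
    using n c S(1) unfolding tagged_diags_def by auto
  let ?Q = "spoke_offsets n c S" and ?A = "arc_ivs n c S"
  have "0 \<in> ?Q"
    using c cn n0 by (auto simp: spoke_offsets_def vtx_def)
  moreover have "finite ?Q"
    by (rule finite_subset[of _ "{..<n}"]) (auto simp: spoke_offsets_def)
  moreover have "?Q \<subseteq> {0..<n}" "\<forall>(x, y)\<in>?A. 0 \<le> x \<and> x + 2 \<le> y \<and> y \<le> n"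
    by (auto simp: spoke_offsets_def arc_ivs_def)
  moreover have "\<forall>(x, y)\<in>?A. \<forall>q\<in>?Q. \<not> (x < q \<and> q < y)"
    using arc_ivs_avoid_spoke_offsets[OF n0 S(2)] by blast
  ultimately obtain ts where ts: "forest_leaves ts = n" "set (spokes ts 0) = ?Q" "?A \<subseteq> forest_ivs ts 0"
    using laminar_in_forest_ivs[of ?Q 0 n ?A] laminar_arc_ivs[OF n0 S(2)] by auto
  then have "ts \<noteq> []"
    using \<open>0 \<in> ?Q\<close> by auto
  then have "ts \<in> Btrees n"
    using Btrees_forest_leaves[OF n] ts(1) by simp
  moreover have "X \<in> tri_of n ts c e" if X: "X \<in> S" for X
  proof (cases X)
    case (Pu a e')
    then have "a < n" using X S(1) unfolding tagged_diags_def by auto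
    define q where "q = (a + n - c) mod n"
    have aq: "a = vtx n c q" and qQ: "q \<in> ?Q"
      using vtx_offset[OF \<open>a < n\<close> cn] X Pu n0 by (auto simp: q_def spoke_offsets_def)
    have "e' = e \<or> length ts = 1"
    proof (rule ccontr)
      assume tags: "\<not> (e' = e \<or> length ts = 1)"
      then have "Pu a (\<not> e) \<in> S"
        using X Pu by (cases e') auto
      then have "?Q = {0}"
        using spoke_offsets_opposite_tags[OF n0 cn S(2) c] \<open>0 \<in> ?Q\<close> by blast
      then show False
        using tags card_spokes[of ts 0] ts(2) by simp
    qed
    then show ?thesis
      unfolding tri_of_def pu_arcs_def using Pu aq qQ ts(2) by auto
  next
    case (Bd a b)
    moreover have "\<not> crosses n X (Pu c e)"
      using X S(2) c unfolding noncrossing_def by blast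
    ultimately have ab: "a < n" "b < n" "a \<noteq> b" "2 \<le> ccw_dist n a b" "c \<notin> bd_inner n a b"
      using X S(1) unfolding tagged_diags_def by auto
    then obtain x where x: "a = vtx n c x" "b = vtx n c (x + ccw_dist n a b)"
      "x + ccw_dist n a b \<le> n"
      using Bd_vtx_offsets[OF n0 _ _ cn] by blast
    then have "(x, x + ccw_dist n a b) \<in> bd_ivs n ts"
      using ts(3) ccw_dist_less[OF n0, of a b] ab X Bd by (auto simp: arc_ivs_def bd_ivs_def)
    then show ?thesis
      unfolding tri_of_def bd_arcs_def using Bd x by (auto intro!: image_eqI)
  qed
  ultimately show ?thesis by blast
qed

lemma tri_of_in_Tri:
  assumes n: "2 \<le> n" and ts: "ts \<in> Btrees n"
  shows "tri_of n ts p e \<in> Tri n"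
proof -
  have ts': "forest_leaves ts = n" "ts \<noteq> []"
    using ts by (simp_all add: Btrees_forest_leaves[OF n])
  then have "0 \<in> set (spokes ts 0)"
    by (cases ts) auto
  then have pu: "Pu (vtx n p 0) e \<in> tri_of n ts p e"
    unfolding tri_of_def pu_arcs_def by blast
  have "S = tri_of n ts p e"
    if S: "tri_of n ts p e \<subseteq> S" "S \<subseteq> tagged_diags n" "noncrossing n S" for S
  proof -
    obtain ts' where ts'': "ts' \<in> Btrees n" "S \<subseteq> tri_of n ts' (vtx n p 0) e"
      using noncrossing_subset_tri_of[OF n S(2,3)] pu S(1) by blast
    have fin: "finite (tri_of n ts' (vtx n p 0) e)"
      using card_tri_of[OF n ts''(1)] n by (intro card_ge_0_finite) simp
    then have "tri_of n ts p e = tri_of n ts' (vtx n p 0) e"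
      using S(1) ts''(2) card_tri_of[OF n ts''(1), of "vtx n p 0" e] card_tri_of[OF n ts, of p e]
      by (intro card_subset_eq[OF fin]) auto
    then show ?thesis
      using S(1) ts''(2) by blast
  qed
  then show ?thesis
    unfolding Tri_def triangulation_def mem_Collect_eq
    using tri_of_subset_tagged_diags[OF n ts'(1)] noncrossing_tri_of[OF n ts'(1)]
    by (intro conjI allI impI) auto
qed

lemma bd_edges_vtx_base: "bd_edges n a b = vtx n a ` {..<ccw_dist n a b}"
  unfolding bd_edges_def vtx_def by auto

lemma card_bd_edges:
  assumes "0 < n"
  shows "card (bd_edges n a b) = ccw_dist n a b"
proof -
  have "{..<ccw_dist n a b} \<subseteq> {..<n}"
    using ccw_dist_less[OF assms, of a b] by auto
  then show ?thesis
    unfolding bd_edges_vtx_base by (simp add: card_image inj_on_subset[OF inj_on_vtx])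
qed

lemma vtx_pred:
  assumes "0 < n" "0 < i"
  shows "(vtx n a i + (n - 1)) mod n = vtx n a (i - 1)"
proof -
  have "(vtx n a i + (n - 1)) mod n = vtx n a (n - 1 + i)"
    by (simp only: vtx_add_mod vtx_shift_base)
  also have "n - 1 + i = (i - 1) + n"
    using assms by simp
  finally show ?thesis
    by (simp only: vtx_add_self)
qed

lemma bd_inner_imp_edges:
  assumes "0 < n" "c \<in> bd_inner n a b"
  shows "c \<in> bd_edges n a b" "(c + (n - 1)) mod n \<in> bd_edges n a b"
proof -
  obtain i where i: "c = vtx n a i" "0 < i" "i < ccw_dist n a b"
    using assms(2) unfolding bd_inner_def vtx_def by auto
  then show "c \<in> bd_edges n a b" "(c + (n - 1)) mod n \<in> bd_edges n a b"
    unfolding bd_edges_vtx_base vtx_pred[OF assms(1) i(2), of a, folded i(1)] by auto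
qed

lemma bd_edges_end:
  assumes "0 < n" "a < n" "b < n" "a \<noteq> b"
  shows "(b + (n - 1)) mod n \<in> bd_edges n a b" "b \<notin> bd_edges n a b"
proof -
  have d: "vtx n a (ccw_dist n a b) = b" "ccw_dist n a b < n"
    using ccw_dist_add[OF assms(2,3)] ccw_dist_less[OF assms(1)] by (simp_all add: vtx_def)
  moreover have "ccw_dist n a b \<noteq> 0"
  proof
    assume "ccw_dist n a b = 0"
    then show False
      using ccw_dist_add[OF assms(2,3)] assms by simp
  qed
  then show "(b + (n - 1)) mod n \<in> bd_edges n a b"
    using vtx_pred[OF assms(1), of "ccw_dist n a b" a] d(1) unfolding bd_edges_vtx_base by auto
  show "b \<notin> bd_edges n a b"
  proof
    assume "b \<in> bd_edges n a b"
    then obtain j where "j < ccw_dist n a b" "vtx n a j = vtx n a (ccw_dist n a b)"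
      using d(1) unfolding bd_edges_vtx_base by auto
    then show False
      using vtx_inj[of j n "ccw_dist n a b" a] d(2) by simp
  qed
qed

text \<open>The far endpoint of a longest border arc lies strictly inside no border arc: otherwise
  that arc would share the border edge ending there and contain the next one, hence be longer.\<close>
lemma exists_free_vertex:
  assumes n: "2 \<le> n" and T: "T \<subseteq> tagged_diags n" "noncrossing n T"
  shows "\<exists>c<n. \<forall>a b. Bd a b \<in> T \<longrightarrow> c \<notin> bd_inner n a b"
proof (cases "\<exists>a b. Bd a b \<in> T")
  case False
  then show ?thesis using n by (intro exI[of _ 0]) auto
next
  case True
  have n0: "0 < n" using n by simp
  define D where "D = {ccw_dist n a b | a b. Bd a b \<in> T}"
  have "D \<subseteq> {..<n}"
    using ccw_dist_less[OF n0] by (auto simp: D_def)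
  then have "finite D"
    by (rule finite_subset) simp
  moreover have "D \<noteq> {}"
    using True by (auto simp: D_def)
  ultimately have "Max D \<in> D"
    by (rule Max_in)
  then obtain a b where ab: "Bd a b \<in> T" "ccw_dist n a b = Max D"
    unfolding D_def mem_Collect_eq by metis
  have ab_n: "a < n" "b < n" "a \<noteq> b"
    using ab(1) T(1) unfolding tagged_diags_def by auto
  have "b \<notin> bd_inner n a' b'" if ab': "Bd a' b' \<in> T" for a' b'
  proof
    assume "b \<in> bd_inner n a' b'"
    then have "(b + (n - 1)) mod n \<in> bd_edges n a b \<inter> bd_edges n a' b'"
      "b \<in> bd_edges n a' b' - bd_edges n a b"
      using bd_inner_imp_edges[OF n0] bd_edges_end[OF n0 ab_n] by auto
    moreover have "\<not> crosses n (Bd a b) (Bd a' b')"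
      using T(2) ab(1) ab' unfolding noncrossing_def by blast
    ultimately have "bd_edges n a b \<subset> bd_edges n a' b'"
      by auto
    then have "ccw_dist n a b < ccw_dist n a' b'"
      using psubset_card_mono[of "bd_edges n a' b'"] card_bd_edges[OF n0]
      by (metis bd_edges_vtx_base finite_imageI finite_lessThan)
    moreover have "ccw_dist n a' b' \<le> Max D"
      using \<open>finite D\<close> ab' by (intro Max_ge) (auto simp: D_def)
    ultimately show False
      using ab(2) by simp
  qed
  then show ?thesis
    using ab_n by blast
qed

lemma Tri_has_Pu:
  assumes n: "2 \<le> n" and T: "T \<in> Tri n"
  shows "\<exists>c e. Pu c e \<in> T"
proof (rule ccontr)
  assume no_Pu: "\<not> ?thesis"
  have T': "T \<subseteq> tagged_diags n" "noncrossing n T"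
    "\<And>S. T \<subseteq> S \<Longrightarrow> S \<subseteq> tagged_diags n \<Longrightarrow> noncrossing n S \<Longrightarrow> S = T"
    using T unfolding Tri_def triangulation_def by blast+
  obtain c where c: "c < n" "\<forall>a b. Bd a b \<in> T \<longrightarrow> c \<notin> bd_inner n a b"
    using exists_free_vertex[OF n T'(1,2)] by blast
  have "\<not> crosses n (Pu c True) Z" "\<not> crosses n Z (Pu c True)" if "Z \<in> T" for Z
    using that no_Pu c(2) by (cases Z; auto)+
  then have "noncrossing n (insert (Pu c True) T)"
    using T'(2) unfolding noncrossing_def by auto
  moreover have "insert (Pu c True) T \<subseteq> tagged_diags n"
    using T'(1) c(1) by (simp add: tagged_diags_def) blast
  ultimately have "insert (Pu c True) T = T"
    by (intro T'(3)) auto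
  then show False
    using no_Pu by (metis insertI1)
qed

lemma Tri_imp_tri_of:
  assumes n: "2 \<le> n" and T: "T \<in> Tri n"
  shows "\<exists>ts p e. ts \<in> Btrees n \<and> T = tri_of n ts p e"
proof -
  have T': "T \<subseteq> tagged_diags n" "noncrossing n T"
    "\<And>S. T \<subseteq> S \<Longrightarrow> S \<subseteq> tagged_diags n \<Longrightarrow> noncrossing n S \<Longrightarrow> S = T"
    using T unfolding Tri_def triangulation_def by blast+
  obtain c e where "Pu c e \<in> T"
    using Tri_has_Pu[OF n T] by blast
  then obtain ts where ts: "ts \<in> Btrees n" "T \<subseteq> tri_of n ts c e"
    using noncrossing_subset_tri_of[OF n T'(1,2)] by blast
  then have "forest_leaves ts = n"
    by (simp add: Btrees_forest_leaves[OF n])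
  then have "tri_of n ts c e = T"
    by (intro T'(3)[OF ts(2)] tri_of_subset_tagged_diags[OF n] noncrossing_tri_of[OF n])
  then show ?thesis
    using ts(1) by blast
qed

section \<open>Reading off the forest\<close>

lemma side_tri_of_iff:
  assumes "0 < n" "forest_leaves ts = n" "x < y" "y \<le> n" "y - x < n"
  shows "side n (tri_of n ts p e) (vtx n p x) (vtx n p y) \<longleftrightarrow> y - x = 1 \<or> (x, y) \<in> bd_ivs n ts"
  using Bd_vtx_in_bd_arcs_iff[OF assms(2-4)] ccw_dist_vtx[of n x y p] assms
  by (auto simp: side_def tri_of_def pu_arcs_def)

text \<open>The apex of the triangle on a side is the only vertex joined to both of its ends.\<close>
lemma laminar_apex_unique:
  assumes lam: "laminar A"
    and l: "2 \<le> L \<Longrightarrow> (s, s + L) \<in> A" and r: "2 \<le> R \<Longrightarrow> (s + L, s + L + R) \<in> A"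
    and lr: "1 \<le> L" "1 \<le> R" and m: "s < m" "m < s + L + R"
    and sm: "m - s = 1 \<or> (s, m) \<in> A" and me: "s + L + R - m = 1 \<or> (m, s + L + R) \<in> A"
  shows "m = s + L"
proof (rule ccontr)
  assume ne: "m \<noteq> s + L"
  show False
  proof (cases "m < s + L")
    case True
    then have "nested_or_disjoint (s, s + L) (m, s + L + R)"
      using lam l me m lr unfolding laminar_def by force
    then show False
      using True m lr by auto
  next
    case False
    then have "nested_or_disjoint (s, m) (s + L, s + L + R)"
      using lam r sm m ne lr unfolding laminar_def by force
    then show False
      using False ne m lr by auto
  qed
qed

lemma apex_tri_of:
  assumes n: "0 < n" "forest_leaves ts = n"
    and sub: "tree_ivs (Nd l r) s \<subseteq> bd_ivs n ts" and bounds: "s + leaves (Nd l r) \<le> n" "leaves (Nd l r) < n"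
  defines "L \<equiv> leaves l" and "R \<equiv> leaves r"
  shows "(THE v. v \<in> bd_inner n (vtx n p s) (vtx n p (s + (L + R)))
      \<and> side n (tri_of n ts p e) (vtx n p s) v \<and> side n (tri_of n ts p e) v (vtx n p (s + (L + R))))
    = vtx n p (s + L)" (is "The ?apex = _")
proof (rule the_equality)
  have lr: "1 \<le> L" "1 \<le> R"
    unfolding L_def R_def by (rule leaves_ge_1)+
  have inL: "2 \<le> L \<Longrightarrow> (s, s + L) \<in> bd_ivs n ts"
    using tree_ivs_top[of l s] sub by (auto simp: L_def)
  have inR: "2 \<le> R \<Longrightarrow> (s + L, s + L + R) \<in> bd_ivs n ts"
    using tree_ivs_top[of r "s + L"] sub by (auto simp: L_def R_def)
  have inner: "bd_inner n (vtx n p s) (vtx n p (s + (L + R))) = vtx n p ` {s<..<s + (L + R)}"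
    using bd_inner_vtx[of n s "s + (L + R)" p] n bounds by (simp add: L_def R_def)
  have sideL: "side n (tri_of n ts p e) (vtx n p s) (vtx n p m) \<longleftrightarrow> m - s = 1 \<or> (s, m) \<in> bd_ivs n ts"
    if "s < m" "m < s + L + R" for m
    using side_tri_of_iff[OF n, of s m] that bounds by (simp add: L_def R_def)
  have sideR: "side n (tri_of n ts p e) (vtx n p m) (vtx n p (s + (L + R)))
      \<longleftrightarrow> s + L + R - m = 1 \<or> (m, s + L + R) \<in> bd_ivs n ts"
    if "s < m" "m < s + L + R" for m
    using side_tri_of_iff[OF n, of m "s + (L + R)"] that bounds by (simp add: L_def R_def add.assoc)
  show "?apex (vtx n p (s + L))"
    unfolding inner using sideL[of "s + L"] sideR[of "s + L"] lr inL inR by (auto simp: add.assoc)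
  fix v assume "?apex v"
  then obtain m where m: "s < m" "m < s + L + R" "v = vtx n p m"
    unfolding inner by auto
  then have "m = s + L"
    using laminar_apex_unique[OF laminar_bd_ivs inL inR lr m(1,2)] \<open>?apex v\<close> sideL sideR by auto
  then show "v = vtx n p (s + L)"
    using m by simp
qed

lemma subf_tri_of:
  assumes n: "0 < n" "forest_leaves ts = n"
  shows "tree_ivs t s \<subseteq> bd_ivs n ts \<Longrightarrow> s + leaves t \<le> n \<Longrightarrow> leaves t < n \<Longrightarrow> leaves t \<le> k
    \<Longrightarrow> subf n (tri_of n ts p e) k (vtx n p s) (vtx n p (s + leaves t)) = t"
proof (induction t arbitrary: s k)
  case Lf
  then obtain k' where "k = Suc k'"
    by (cases k) auto
  moreover have "ccw_dist n (vtx n p s) (vtx n p (s + 1)) = 1"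
    using ccw_dist_vtx[of n s "s + 1" p] n Lf.prems(3) by simp
  ultimately show ?case
    by simp
next
  case (Nd l r)
  let ?L = "leaves l" and ?R = "leaves r"
  obtain k' where k: "k = Suc k'"
    using Nd.prems(4) leaves_ge_1[of l] by (cases k) auto
  have "ccw_dist n (vtx n p s) (vtx n p (s + (?L + ?R))) = ?L + ?R"
    using ccw_dist_vtx[of n s "s + (?L + ?R)" p] n Nd.prems by simp
  then have "subf n (tri_of n ts p e) k (vtx n p s) (vtx n p (s + leaves (Nd l r)))
      = Nd (subf n (tri_of n ts p e) k' (vtx n p s) (vtx n p (s + ?L)))
           (subf n (tri_of n ts p e) k' (vtx n p (s + ?L)) (vtx n p (s + ?L + ?R)))"
    using k leaves_ge_1[of l] leaves_ge_1[of r] apex_tri_of[OF n Nd.prems(1-3), of p e]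
    by (simp add: Let_def add.assoc)
  also have "\<dots> = Nd l r"
    using Nd.IH(1)[of s k'] Nd.IH(2)[of "s + ?L" k'] Nd.prems k leaves_ge_1[of l] leaves_ge_1[of r]
    by (auto simp: add.assoc)
  finally show ?case .
qed

lemma tree_ivs_subset_bd_ivs:
  assumes "ts = [Nd l r]" "forest_leaves ts = n"
  shows "tree_ivs l 0 \<union> tree_ivs r (leaves l) \<subseteq> bd_ivs n ts"
proof
  fix P assume "P \<in> tree_ivs l 0 \<union> tree_ivs r (leaves l)"
  then show "P \<in> bd_ivs n ts"
    using assms tree_ivs_bounds[of "fst P" "snd P" l 0] tree_ivs_bounds[of "fst P" "snd P" r "leaves l"]
      leaves_ge_1[of l] leaves_ge_1[of r]
    by (cases P) (auto simp: bd_ivs_def)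
qed

lemma loop_apex_tri_of:
  assumes n: "2 \<le> n" and ts: "ts = [Nd l r]" "forest_leaves ts = n"
  shows "(THE v. v < n \<and> v \<noteq> vtx n p 0 \<and> side n (tri_of n ts p e) (vtx n p 0) v
      \<and> side n (tri_of n ts p e) v (vtx n p 0)) = vtx n p (leaves l)" (is "The ?apex = _")
proof (rule the_equality)
  let ?L = "leaves l" and ?R = "leaves r"
  have n0: "0 < n" and LR: "?L + ?R = n" and lr: "1 \<le> ?L" "1 \<le> ?R"
    using n ts leaves_ge_1[of l] leaves_ge_1[of r] by auto
  have inL: "2 \<le> ?L \<Longrightarrow> (0, 0 + ?L) \<in> bd_ivs n ts"
    using tree_ivs_top[of l 0] tree_ivs_subset_bd_ivs[OF ts] by auto
  have inR: "2 \<le> ?R \<Longrightarrow> (0 + ?L, 0 + ?L + ?R) \<in> bd_ivs n ts"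
    using tree_ivs_top[of r ?L] tree_ivs_subset_bd_ivs[OF ts] by auto
  have sideL: "side n (tri_of n ts p e) (vtx n p 0) (vtx n p m) \<longleftrightarrow> m - 0 = 1 \<or> (0, m) \<in> bd_ivs n ts"
    if "0 < m" "m < n" for m
    using side_tri_of_iff[OF n0 ts(2), of 0 m] that by simp
  have sideR: "side n (tri_of n ts p e) (vtx n p m) (vtx n p 0)
      \<longleftrightarrow> 0 + ?L + ?R - m = 1 \<or> (m, 0 + ?L + ?R) \<in> bd_ivs n ts"
    if "0 < m" "m < n" for m
    using side_tri_of_iff[OF n0 ts(2), of m n] that LR by (simp add: vtx_self)
  have "vtx n p ?L \<noteq> vtx n p 0"
    using vtx_inj[of ?L n 0 p] lr LR by auto
  then show "?apex (vtx n p ?L)"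
    using vtx_less[OF n0] sideL[of ?L] sideR[of ?L] lr LR inL inR by auto
  fix v assume "?apex v"
  define m where "m = (v + n - p mod n) mod n"
  have "v = vtx n p m" "m < n"
    using \<open>?apex v\<close> vtx_offset[of v n "p mod n"] n0 by (auto simp: m_def vtx_mod_base)
  moreover have "m \<noteq> 0"
    using \<open>?apex v\<close> calculation(1) by (intro notI) simp
  ultimately have m: "v = vtx n p m" "m < n" "m \<noteq> 0" .
  then have "m = 0 + ?L"
    using laminar_apex_unique[OF laminar_bd_ivs inL inR lr, of m] \<open>?apex v\<close> sideL sideR LR by auto
  then show "v = vtx n p ?L"
    using m by simp
qed

lemma sigma_tri_single:
  assumes n: "2 \<le> n" and ts: "ts = [Nd l r]" "forest_leaves ts = n"
  shows "sigma_tri n (tri_of n ts p e) = ts"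
proof -
  let ?T = "tri_of n ts p e" and ?L = "leaves l" and ?R = "leaves r"
  have n0: "0 < n" and LR: "?L + ?R = n" and lr: "1 \<le> ?L" "1 \<le> ?R"
    using n ts leaves_ge_1[of l] leaves_ge_1[of r] by auto
  have R: "n - ?L = ?R"
    using LR by simp
  have pu: "Pu c e' \<in> ?T \<longleftrightarrow> c = vtx n p 0" for c e'
    using ts by (auto simp: tri_of_def bd_arcs_def pu_arcs_def)
  have "subt n ?T (vtx n p 0) (vtx n p ?L) = l"
    using subf_tri_of[OF n0 ts(2), of l 0 ?L p e] tree_ivs_subset_bd_ivs[OF ts] ccw_dist_vtx[of n 0 ?L p]
      lr LR n0 by (simp add: subt_def)
  moreover have "subt n ?T (vtx n p ?L) (vtx n p (?L + ?R)) = r"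
    using subf_tri_of[OF n0 ts(2), of r ?L ?R p e] le_refl[of n, folded LR] LR tree_ivs_subset_bd_ivs[OF ts] ccw_dist_vtx[of n ?L "?L + ?R" p]
      lr n0 LR by (simp add: subt_def R)
  ultimately show ?thesis
    unfolding sigma_tri_def using pu loop_apex_tri_of[OF n ts, of p e] ts LR
    by (simp add: Let_def vtx_self)
qed

lemma forest_leaves_append_take_drop:
  "forest_leaves ts = forest_leaves (take j ts) + forest_leaves (drop j ts)"
  by (metis append_take_drop_id map_append sum_list_append)

lemma forest_leaves_take_Suc:
  "i < length ts \<Longrightarrow> forest_leaves (take (Suc i) ts) = forest_leaves (take i ts) + leaves (ts ! i)"
  by (simp add: take_Suc_conv_app_nth)

lemma leaves_nth_less:
  assumes "2 \<le> length ts" "i < length ts"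
  shows "leaves (ts ! i) < forest_leaves ts"
proof -
  have "forest_leaves ts = forest_leaves (take i ts) + leaves (ts ! i) + forest_leaves (drop (Suc i) ts)"
    using forest_leaves_append_take_drop[of ts "Suc i"] forest_leaves_take_Suc[OF assms(2)] by simp
  moreover have "i \<le> forest_leaves (take i ts)" "length ts - Suc i \<le> forest_leaves (drop (Suc i) ts)"
    using length_le_forest_leaves[of "take i ts"] length_le_forest_leaves[of "drop (Suc i) ts"] assms
    by simp_all
  ultimately show ?thesis
    using assms by linarith
qed

lemma subt_tri_of_nth:
  assumes n: "0 < n" "forest_leaves ts = n" and i: "2 \<le> length ts" "i < length ts"
  shows "subt n (tri_of n ts p e) (vtx n p (forest_leaves (take i ts)))
      (vtx n p (forest_leaves (take (Suc i) ts))) = ts ! i"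
proof -
  define s where "s = forest_leaves (take i ts)"
  have L: "leaves (ts ! i) < n" "s + leaves (ts ! i) \<le> n"
    using leaves_nth_less[OF i] forest_leaves_take_Suc[OF i(2)] n(2)
      forest_leaves_append_take_drop[of ts "Suc i"]
    by (simp_all add: s_def)
  have "tree_ivs (ts ! i) s \<subseteq> bd_ivs n ts"
  proof
    fix P assume P: "P \<in> tree_ivs (ts ! i) s"
    then have "P \<in> forest_ivs ts 0"
      using tree_ivs_nth_subset[OF i(2), of 0] nth_spokes[OF i(2), of 0] by (auto simp: s_def)
    moreover have "snd P - fst P < n"
      using tree_ivs_bounds[of "fst P" "snd P" "ts ! i" s] P L by auto
    ultimately show "P \<in> bd_ivs n ts"
      by (cases P) (simp add: bd_ivs_def)
  qed
  moreover have "ccw_dist n (vtx n p s) (vtx n p (s + leaves (ts ! i))) = leaves (ts ! i)"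
    using ccw_dist_vtx[of n s "s + leaves (ts ! i)" p] n L by simp
  ultimately show ?thesis
    using subf_tri_of[OF n, of "ts ! i" s "leaves (ts ! i)" p e] L
      forest_leaves_take_Suc[OF i(2)] by (simp add: subt_def s_def)
qed

lemma sorted_list_of_set_strict: "sorted_wrt (<) xs \<Longrightarrow> sorted_list_of_set (set xs) = xs"
  by (simp add: sorted_list_of_set_sort_remdups strict_sorted_iff distinct_remdups_id sorted_sort_id)

lemma sorted_vtx_wrapped:
  assumes sorted: "sorted_wrt (<) (L1 @ L2)" and less: "\<forall>q\<in>set (L1 @ L2). q < n"
    and L1: "\<forall>q\<in>set L1. p mod n + q < n" and L2: "\<forall>q\<in>set L2. n \<le> p mod n + q"
  shows "sorted_wrt (<) (map (vtx n p) L2 @ map (vtx n p) L1)"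
proof -
  have vtx_eq: "vtx n p q = (p mod n + q) mod n" for q
    unfolding vtx_def by (simp add: mod_add_left_eq)
  have v1: "vtx n p q = p mod n + q" if "q \<in> set L1" for q
    using that L1 vtx_eq by simp
  have v2: "vtx n p q = p mod n + q - n" if "q \<in> set L2" for q
  proof -
    have "q < n"
      using less that by auto
    then have "p mod n < n"
      by (cases n) auto
    have "n \<le> p mod n + q"
      using L2 that by blast
    then have "(p mod n + q) mod n = (p mod n + q - n) mod n"
      by (rule le_mod_geq)
    also have "\<dots> = p mod n + q - n"
      using \<open>p mod n < n\<close> \<open>q < n\<close> by (intro mod_less) linarith
    finally show ?thesis
      using vtx_eq[of q] by simp
  qed
  have sL: "sorted_wrt (<) L1" "sorted_wrt (<) L2"
    using sorted by (simp_all add: sorted_wrt_append)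
  show ?thesis
    unfolding sorted_wrt_append
  proof (intro conjI ballI)
    show "sorted_wrt (<) (map (vtx n p) L2)"
      unfolding sorted_wrt_map
      by (rule sorted_wrt_mono_rel[OF _ sL(2)]) (metis L2 v2 diff_less_mono nat_add_left_cancel_less)
    show "sorted_wrt (<) (map (vtx n p) L1)"
      unfolding sorted_wrt_map
      by (rule sorted_wrt_mono_rel[OF _ sL(1)]) (use v1 in auto)
    fix x y assume "x \<in> set (map (vtx n p) L2)" "y \<in> set (map (vtx n p) L1)"
    then obtain a c where "a \<in> set L2" "c \<in> set L1" "x = vtx n p a" "y = vtx n p c"
      by auto
    moreover have "a < n"
      using less \<open>a \<in> set L2\<close> by simp
    ultimately show "x < y"
      using v1 v2 L2 by fastforce
  qed
qed

text \<open>Vertices given by increasing offsets from p, sorted by label, start at the first offset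
  that wraps around past vertex n - 1.\<close>
lemma sorted_list_of_set_vtx:
  assumes qs: "sorted_wrt (<) qs" "\<forall>q\<in>set qs. q < n"
  shows "\<exists>m. sorted_list_of_set (vtx n p ` set qs) = rotate m (map (vtx n p) qs)"
proof -
  define L1 where "L1 = takeWhile (\<lambda>q. p mod n + q < n) qs"
  define L2 where "L2 = dropWhile (\<lambda>q. p mod n + q < n) qs"
  have qs_eq: "qs = L1 @ L2"
    by (simp add: L1_def L2_def)
  have "\<forall>q\<in>set L1. p mod n + q < n"
    unfolding L1_def by (blast dest: set_takeWhileD)
  moreover have "n \<le> p mod n + q" if "q \<in> set L2" for q
  proof (cases L2)
    case (Cons a L2')
    then have "\<not> p mod n + a < n"
      unfolding L2_def by (metis dropWhile_eq_Cons_conv)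
    moreover have "\<forall>q\<in>set L2'. a < q"
      using qs(1) Cons by (simp add: qs_eq sorted_wrt_append)
    ultimately show ?thesis
      using that Cons by (auto simp: less_imp_le)
  qed (use that in simp)
  ultimately have "sorted_wrt (<) (map (vtx n p) L2 @ map (vtx n p) L1)"
    using sorted_vtx_wrapped qs unfolding qs_eq by blast
  then have "sorted_list_of_set (vtx n p ` set qs) = map (vtx n p) L2 @ map (vtx n p) L1"
    using sorted_list_of_set_strict by (fastforce simp: qs_eq Un_commute image_Un)
  also have "\<dots> = rotate (length L1) (map (vtx n p) qs)"
    using rotate_append[of "map (vtx n p) L1" "map (vtx n p) L2"] by (simp add: qs_eq)
  finally show ?thesis ..
qed

lemma map_cyclic_pairs_rotate:
  assumes "length ws = k" "0 < k"
  shows "map (\<lambda>i. F (rotate m ws ! i) (rotate m ws ! ((i + 1) mod k))) [0..<k]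
       = rotate m (map (\<lambda>i. F (ws ! i) (ws ! ((i + 1) mod k))) [0..<k])"
proof (rule nth_equalityI)
  fix i assume "i < length (map (\<lambda>i. F (rotate m ws ! i) (rotate m ws ! ((i + 1) mod k))) [0..<k])"
  moreover have "(m + Suc i mod k) mod k = Suc ((m + i) mod k) mod k"
    by (simp add: mod_simps)
  ultimately show "map (\<lambda>i. F (rotate m ws ! i) (rotate m ws ! ((i + 1) mod k))) [0..<k] ! i =
      rotate m (map (\<lambda>i. F (ws ! i) (ws ! ((i + 1) mod k))) [0..<k]) ! i"
    using assms by (simp add: nth_rotate)
qed simp

lemma sigma_tri_multi:
  assumes n: "0 < n" "forest_leaves ts = n" and len: "2 \<le> length ts"
  shows "\<exists>m. sigma_tri n (tri_of n ts p e) = rotate m ts"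
proof -
  let ?T = "tri_of n ts p e"
  define k where "k = length ts"
  define ws where "ws = map (vtx n p) (spokes ts 0)"
  have k: "0 < k" "length ws = k"
    using len unfolding k_def ws_def by auto
  have "length ts \<noteq> 1"
    using len by simp
  then have pu: "Pu c e' \<in> ?T \<longleftrightarrow> e' = e \<and> c \<in> set ws" for c e'
    by (auto simp: tri_of_def bd_arcs_def pu_arcs_def ws_def)
  obtain m where m: "sorted_list_of_set (set ws) = rotate m ws"
    using sorted_list_of_set_vtx[OF sorted_spokes, of ts 0 n p] spokes_less[OF n(2)]
    by (auto simp: ws_def)
  have "map (\<lambda>i. subt n ?T (ws ! i) (ws ! ((i + 1) mod k))) [0..<k] = ts"
  proof (rule nth_equalityI)
    fix i assume "i < length (map (\<lambda>i. subt n ?T (ws ! i) (ws ! ((i + 1) mod k))) [0..<k])"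
    then have i: "i < length ts"
      by (simp add: k_def)
    have "ws ! ((i + 1) mod k) = vtx n p (forest_leaves (take (Suc i) ts))"
    proof (cases "Suc i < k")
      case False
      then have "Suc i = k"
        using i k_def by simp
      then show ?thesis
        using nth_spokes[of 0 ts 0] n(2) k vtx_self by (simp add: ws_def k_def)
    qed (simp add: ws_def k_def nth_spokes)
    then show "map (\<lambda>i. subt n ?T (ws ! i) (ws ! ((i + 1) mod k))) [0..<k] ! i = ts ! i"
      using subt_tri_of_nth[OF n len i] i nth_spokes[OF i, of 0] by (simp add: ws_def k_def)
  qed (simp add: k_def)
  moreover have "sigma_tri n ?T = map (\<lambda>i. subt n ?T (rotate m ws ! i) (rotate m ws ! ((i + 1) mod k))) [0..<k]"
    unfolding sigma_tri_def using pu m k by (auto simp: Let_def)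
  ultimately show ?thesis
    using map_cyclic_pairs_rotate[OF k(2,1)] by metis
qed

lemma sigma_tri_tri_of:
  assumes n: "2 \<le> n" and ts: "ts \<in> Btrees n"
  shows "\<exists>m. sigma_tri n (tri_of n ts p e) = rotate m ts"
proof -
  have ts': "forest_leaves ts = n" "ts \<noteq> []"
    using ts by (simp_all add: Btrees_forest_leaves[OF n])
  show ?thesis
  proof (cases "length ts = 1")
    case True
    then obtain t where t: "ts = [t]" "leaves t = n"
      using ts' by (cases ts) auto
    then obtain l r where "t = Nd l r"
      using n by (cases t) auto
    then show ?thesis
      using sigma_tri_single[OF n _ ts'(1), of l r p e] t by (intro exI[of _ 0]) simp
  next
    case False
    then have "2 \<le> length ts"
      using ts'(2) by (cases ts) (auto simp: Suc_le_eq)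
    then show ?thesis
      using sigma_tri_multi ts' n by simp
  qed
qed

section \<open>Rotation and inversion of tags\<close>

definition shift_iv :: "nat \<Rightarrow> nat \<times> nat \<Rightarrow> nat \<times> nat" where
  "shift_iv b P = (fst P + b, snd P + b)"

lemma tree_ivs_shift: "tree_ivs t (a + b) = shift_iv b ` tree_ivs t a"
proof (induction t arbitrary: a)
  case (Nd l r)
  have "tree_ivs r (a + b + leaves l) = shift_iv b ` tree_ivs r (a + leaves l)"
    using Nd.IH(2)[of "a + leaves l"] by (simp add: ac_simps)
  then show ?case
    using Nd.IH(1)[of a] by (simp add: shift_iv_def image_Un ac_simps)
qed simp

lemma forest_ivs_shift: "forest_ivs ts (a + b) = shift_iv b ` forest_ivs ts a"
proof (induction ts arbitrary: a)
  case (Cons t ts)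
  have "forest_ivs ts (a + b + leaves t) = shift_iv b ` forest_ivs ts (a + leaves t)"
    using Cons.IH[of "a + leaves t"] by (simp add: ac_simps)
  then show ?case
    using tree_ivs_shift[of t a b] by (simp add: image_Un)
qed simp

lemma spokes_shift: "spokes ts (a + b) = map (\<lambda>q. q + b) (spokes ts a)"
proof (induction ts arbitrary: a)
  case (Cons t ts)
  have "a + b + leaves t = (a + leaves t) + b"
    by simp
  then show ?case
    by (simp only: spokes.simps Cons.IH list.map)
qed simp

lemma spokes_append: "spokes (xs @ ys) a = spokes xs a @ spokes ys (a + forest_leaves xs)"
  by (induction xs arbitrary: a) (auto simp: ac_simps)

lemma forest_ivs_append: "forest_ivs (xs @ ys) a = forest_ivs xs a \<union> forest_ivs ys (a + forest_leaves xs)"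
  by (induction xs arbitrary: a) (auto simp: ac_simps)

lemma bd_arcs_shift: "bd_arcs n p (shift_iv b ` A) = bd_arcs n (p + b) A"
  unfolding bd_arcs_def shift_iv_def image_image
  by (rule image_cong) (auto simp: vtx_def ac_simps)

lemma bd_arcs_add_self: "bd_arcs n (p + n) A = bd_arcs n p A"
  unfolding bd_arcs_def by (simp add: vtx_add_self_base)

lemma bd_arcs_Un: "bd_arcs n p (A \<union> B) = bd_arcs n p A \<union> bd_arcs n p B"
  unfolding bd_arcs_def by (simp add: image_Un)

lemma pu_arcs_multi: "length ts \<noteq> 1 \<Longrightarrow> pu_arcs n ts p e = (\<lambda>q. Pu (vtx n p q) e) ` set (spokes ts 0)"
  unfolding pu_arcs_def by auto

lemma tri_of_rotate1:
  assumes n: "forest_leaves (t # ts) = n" and ts: "ts \<noteq> []"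
  shows "tri_of n (ts @ [t]) (p + leaves t) e = tri_of n (t # ts) p e"
proof -
  let ?a = "leaves t"
  have len: "length (ts @ [t]) \<noteq> 1" "length (t # ts) \<noteq> 1"
    using ts by auto
  have n': "forest_leaves (ts @ [t]) = n" "?a + forest_leaves ts = n"
    using n by simp_all
  have "(\<lambda>q. ?a + q) ` set (spokes (ts @ [t]) 0) = set (spokes ts ?a) \<union> {n}"
    using spokes_append[of ts "[t]" 0] spokes_shift[of ts 0 ?a] n'(2) by (auto simp: ac_simps)
  moreover have "pu_arcs n (ts @ [t]) (p + ?a) e
      = (\<lambda>q. Pu (vtx n p q) e) ` ((\<lambda>q. ?a + q) ` set (spokes (ts @ [t]) 0))"
    unfolding pu_arcs_multi[OF len(1)] by (simp add: image_image vtx_shift_base)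
  ultimately have "pu_arcs n (ts @ [t]) (p + ?a) e = (\<lambda>q. Pu (vtx n p q) e) ` (set (spokes ts ?a) \<union> {n})"
    by simp
  also have "\<dots> = pu_arcs n (t # ts) p e"
    unfolding pu_arcs_multi[OF len(2)] using vtx_self[of n p] by auto
  finally have pu: "pu_arcs n (ts @ [t]) (p + ?a) e = pu_arcs n (t # ts) p e" .
  have "bd_arcs n (p + ?a) (bd_ivs n (ts @ [t]))
      = bd_arcs n (p + ?a) (forest_ivs ts 0 \<union> tree_ivs t (forest_leaves ts))"
    using bd_ivs_eq_forest_ivs[OF n'(1) len(1)] forest_ivs_append[of ts "[t]" 0] by simp
  also have "\<dots> = bd_arcs n p (shift_iv ?a ` forest_ivs ts 0) \<union> bd_arcs n (p + ?a + forest_leaves ts) (tree_ivs t 0)"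
    using tree_ivs_shift[of t 0 "forest_leaves ts"] by (simp add: bd_arcs_Un bd_arcs_shift)
  also have "\<dots> = bd_arcs n p (forest_ivs ts ?a) \<union> bd_arcs n p (tree_ivs t 0)"
    using forest_ivs_shift[of ts 0 ?a] n'(2) bd_arcs_add_self[of n p] by (simp add: add.assoc)
  also have "\<dots> = bd_arcs n p (bd_ivs n (t # ts))"
    using bd_ivs_eq_forest_ivs[OF n len(2)] by (simp add: bd_arcs_Un Un_commute)
  finally show ?thesis
    unfolding tri_of_def using pu by simp
qed

lemma forest_leaves_rotate: "forest_leaves (rotate j xs) = forest_leaves xs"
proof (induction j)
  case (Suc j)
  then show ?case
    by (cases "rotate j xs") (simp_all add: rotate1_rotate_swap[symmetric])
qed simp

lemma tri_of_rotate:
  assumes "forest_leaves ts = n"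
  shows "\<exists>q. tri_of n (rotate j ts) q e = tri_of n ts p e"
proof (induction j)
  case (Suc j)
  then obtain q where q: "tri_of n (rotate j ts) q e = tri_of n ts p e"
    by blast
  show ?case
  proof (cases "length ts \<le> 1")
    case True
    then show ?thesis
      using q by (auto simp: rotate_length01)
  next
    case False
    then obtain t ts' where tt: "rotate j ts = t # ts'" "ts' \<noteq> []"
      using length_rotate[of j ts] by (cases "rotate j ts") (auto simp: not_le Suc_less_eq2)
    then have "rotate (Suc j) ts = ts' @ [t]" "forest_leaves (t # ts') = n"
      using forest_leaves_rotate[of j ts] assms by (simp_all add: rotate1_rotate_swap)
    then show ?thesis
      using tri_of_rotate1[of t ts' n q e] tt q by auto
  qed
qed auto

text \<open>Sets related by the generators of the relation need not consist of labels below n, so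
  the invariant is stated after reducing all labels mod n.\<close>
fun norm_arc :: "nat \<Rightarrow> tarc \<Rightarrow> tarc" where
  "norm_arc n (Bd a b) = Bd (a mod n) (b mod n)"
| "norm_arc n (Pu a e) = Pu (a mod n) e"

fun unrot_arc :: "nat \<Rightarrow> tarc \<Rightarrow> tarc" where
  "unrot_arc n (Bd a b) = Bd ((a + (n - 1)) mod n) ((b + (n - 1)) mod n)"
| "unrot_arc n (Pu a e) = Pu ((a + (n - 1)) mod n) e"

lemma norm_rot_arc: "norm_arc n (rot_arc n x) = rot_arc n x"
  by (cases x) auto

lemma rot_arc_norm: "rot_arc n (norm_arc n x) = rot_arc n x"
  by (cases x) (auto simp: mod_simps)

lemma norm_flip_arc: "norm_arc n (flip_arc x) = flip_arc (norm_arc n x)"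
  by (cases x) auto

lemma flip_arc_flip_arc: "flip_arc (flip_arc x) = x"
  by (cases x) auto

lemma unrot_rot_arc:
  assumes "0 < n"
  shows "unrot_arc n (rot_arc n x) = norm_arc n x"
proof -
  have "((c + 1) mod n + (n - 1)) mod n = c mod n" for c
  proof -
    have "((c + 1) mod n + (n - 1)) mod n = (c + 1 + (n - 1)) mod n"
      by (rule mod_add_left_eq)
    also have "c + 1 + (n - 1) = c + n"
      using assms by simp
    finally show ?thesis
      by simp
  qed
  then show ?thesis
    by (cases x) auto
qed

lemma pu_arcs_image:
  "pu_arcs n ts p e = (\<lambda>(q, e'). Pu (vtx n p q) e') ` {(q, e'). q \<in> set (spokes ts 0) \<and> (e' = e \<or> length ts = 1)}"
  unfolding pu_arcs_def by auto

lemma image_tri_of: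
  fixes f :: "tarc \<Rightarrow> tarc"
  assumes Pu: "\<And>q e''. f (Pu (vtx n p q) e'') = Pu (vtx n p' q) (g e'')"
    and Bd: "\<And>x y. f (Bd (vtx n p x) (vtx n p y)) = Bd (vtx n p' x) (vtx n p' y)"
    and g: "bij g"
  shows "f ` tri_of n ts p e = tri_of n ts p' (g e)"
proof -
  let ?G = "\<lambda>e. {(q, e'). q \<in> set (spokes ts 0) \<and> (e' = e \<or> length ts = 1)}"
  have G: "(\<lambda>(q, e'). (q, g e')) ` ?G e = ?G (g e)"
  proof (intro equalityI subsetI)
    fix P assume P: "P \<in> ?G (g e)"
    obtain q e'' where qe: "P = (q, e'')"
      by force
    have "g (inv g e'') = e''" "inv g (g e) = e"
      using g by (simp_all add: bij_is_surj surj_f_inv_f bij_is_inj inv_f_f)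
    then have "(q, inv g e'') \<in> ?G e"
      using P qe by auto
    moreover have "P = (\<lambda>(q, e'). (q, g e')) (q, inv g e'')"
      using qe \<open>g (inv g e'') = e''\<close> by simp
    ultimately show "P \<in> (\<lambda>(q, e'). (q, g e')) ` ?G e"
      by (rule rev_image_eqI)
  qed (use g in \<open>auto simp: bij_def inj_eq\<close>)
  have "f ` pu_arcs n ts p e = (\<lambda>(q, e'). Pu (vtx n p' q) e') ` ((\<lambda>(q, e'). (q, g e')) ` ?G e)"
    unfolding pu_arcs_image image_image by (rule image_cong) (auto simp: Pu)
  then have "f ` pu_arcs n ts p e = pu_arcs n ts p' (g e)"
    unfolding G pu_arcs_image .
  moreover have "f ` bd_arcs n p A = bd_arcs n p' A" for A
    unfolding bd_arcs_def image_image by (rule image_cong) (auto simp: Bd)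
  ultimately show ?thesis
    unfolding tri_of_def image_Un by simp
qed

lemma rot_arc_image_tri_of: "rot_arc n ` tri_of n ts p e = tri_of n ts (p + 1) e"
  by (rule image_tri_of[where g = id, simplified]) (auto simp: Suc_vtx_mod)

lemma unrot_arc_image_tri_of: "unrot_arc n ` tri_of n ts p e = tri_of n ts (p + (n - 1)) e"
  by (rule image_tri_of[where g = id, simplified]) (auto simp: vtx_add_mod)

lemma flip_arc_image_tri_of: "flip_arc ` tri_of n ts p e = tri_of n ts p (\<not> e)"
  by (rule image_tri_of[where g = Not]) (auto simp: bij_def inj_def surj_def)

lemma norm_arc_image_tri_of: "norm_arc n ` tri_of n ts p e = tri_of n ts p e"
  by (rule image_tri_of[where g = id, simplified]) (auto simp: vtx_mod)

lemma norm_arc_image_Tri: "T \<in> Tri n \<Longrightarrow> norm_arc n ` T = T"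
proof -
  assume "T \<in> Tri n"
  then have "T \<subseteq> tagged_diags n"
    unfolding Tri_def triangulation_def by blast
  then have "norm_arc n x = x" if "x \<in> T" for x
    using that unfolding tagged_diags_def by (cases x) auto
  then show ?thesis
    by force
qed

lemma equivclp_tri_step_norm_tri_of:
  assumes n: "0 < n" and eq: "equivclp (tri_step n) X Y" and X: "norm_arc n ` X = tri_of n ts p e"
  shows "\<exists>p' e'. norm_arc n ` Y = tri_of n ts p' e'"
  using eq
proof (induction rule: equivclp_induct)
  case base
  then show ?case using X by blast
next
  case (step y z)
  from step.IH obtain p' e' where y: "norm_arc n ` y = tri_of n ts p' e'"
    by blast
  from step.hyps(2) consider "z = rot_arc n ` y" | "z = flip_arc ` y" | "y = rot_arc n ` z"
    | "y = flip_arc ` z"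
    unfolding tri_step_def by blast
  then show ?case
  proof cases
    case 1
    then have "norm_arc n ` z = rot_arc n ` norm_arc n ` y"
      by (simp add: image_image norm_rot_arc rot_arc_norm)
    then show ?thesis
      using y rot_arc_image_tri_of by metis
  next
    case 2
    then have "norm_arc n ` z = flip_arc ` norm_arc n ` y"
      by (simp add: image_image norm_flip_arc)
    then show ?thesis
      using y flip_arc_image_tri_of by metis
  next
    case 3
    then have "norm_arc n ` z = unrot_arc n ` norm_arc n ` y"
      by (simp add: image_image norm_rot_arc unrot_rot_arc[OF n])
    then show ?thesis
      using y unrot_arc_image_tri_of by metis
  next
    case 4
    then have "norm_arc n ` z = flip_arc ` norm_arc n ` y"
      by (simp add: image_image norm_flip_arc flip_arc_flip_arc)
    then show ?thesis
      using y flip_arc_image_tri_of by metis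
  qed
qed

lemma tri_rel_tri_of:
  assumes "0 < n" "(tri_of n ts p e, T) \<in> tri_rel n"
  shows "\<exists>p' e'. T = tri_of n ts p' e'"
proof -
  have eq: "equivclp (tri_step n) (tri_of n ts p e) T" and T: "T \<in> Tri n"
    using assms(2) unfolding tri_rel_def by auto
  obtain p' e' where "norm_arc n ` T = tri_of n ts p' e'"
    using equivclp_tri_step_norm_tri_of[OF assms(1) eq norm_arc_image_tri_of] by blast
  then show ?thesis
    using norm_arc_image_Tri[OF T] by auto
qed

lemma tri_of_mod_base: "tri_of n ts (p mod n) e = tri_of n ts p e"
  unfolding tri_of_def pu_arcs_def bd_arcs_def by (simp add: vtx_mod_base)

lemma equivclp_tri_of:
  assumes "0 < n"
  shows "equivclp (tri_step n) (tri_of n ts p e) (tri_of n ts p' e')"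
proof -
  have step: "tri_step n (tri_of n ts q e) (tri_of n ts (q + 1) e)"
    "tri_step n (tri_of n ts q e) (tri_of n ts q (\<not> e))" for q e
    unfolding tri_step_def by (simp_all add: rot_arc_image_tri_of flip_arc_image_tri_of)
  have rot: "equivclp (tri_step n) (tri_of n ts q e) (tri_of n ts (q + j) e)" for q j
  proof (induction j)
    case (Suc j)
    then show ?case
      using equivclp_into_equivclp[OF Suc disjI1[OF step(1)[of "q + j" e]]] by simp
  qed simp
  define j where "j = p' mod n + n - p mod n"
  have "(p + j) mod n = (p mod n + j) mod n"
    by (simp add: mod_add_left_eq)
  also have "p mod n + j = p' mod n + n"
    using mod_less_divisor[OF assms, of p] unfolding j_def by linarith
  finally have "(p + j) mod n = p' mod n"
    by simp
  then have "equivclp (tri_step n) (tri_of n ts p e) (tri_of n ts p' e)"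
    using rot[of p j] by (metis tri_of_mod_base)
  moreover have "equivclp (tri_step n) (tri_of n ts p' e) (tri_of n ts p' e')"
    using step(2)[of p' e] by (cases "e' = e") (auto intro: r_into_equivclp)
  ultimately show ?thesis
    by (rule equivclp_trans)
qed

section \<open>The bijection on classes\<close>

lemma equiv_tri_rel: "equiv (Tri n) (tri_rel n)"
  unfolding equiv_def refl_on_def sym_def trans_def tri_rel_def
  by (auto intro: equivclp_sym dest: transpD[OF transp_equivclp])

lemma rotate_rotate_inverse: "\<exists>j. rotate j (rotate k xs) = xs"
proof (cases "xs = []")
  case False
  have "(length xs - k mod length xs + k) mod length xs
      = (length xs - k mod length xs + k mod length xs) mod length xs"
    by (simp add: mod_add_right_eq)
  also have "length xs - k mod length xs + k mod length xs = length xs"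
    using False by (simp add: le_add_diff_inverse2 less_imp_le)
  finally have "rotate (length xs - k mod length xs) (rotate k xs) = xs"
    by (simp add: rotate_rotate rotate_id)
  then show ?thesis ..
qed simp

lemma Btrees_rotate: "s \<in> Btrees n \<Longrightarrow> rotate k s \<in> Btrees n"
  using forest_leaves_rotate[of k s] by (cases "s = []") (simp_all add: Btrees_def root_leaves_def)

lemma equiv_brel: "equiv (Btrees n) (brel n)"
proof (rule equivI)
  show "brel n \<subseteq> Btrees n \<times> Btrees n"
    unfolding brel_def by auto
  show "refl_on (Btrees n) (brel n)"
    unfolding refl_on_def brel_def by (auto intro: exI[of _ 0])
  show "sym (brel n)"
    unfolding sym_def brel_def using rotate_rotate_inverse by (auto, metis)
  show "trans (brel n)"
    unfolding trans_def brel_def by (auto simp: rotate_rotate)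
qed

lemma T_cls_tri_of:
  assumes n: "2 \<le> n" and C: "C \<in> T_cls n"
  shows "\<exists>ts\<in>Btrees n. \<exists>p e. C = tri_rel n `` {tri_of n ts p e}"
proof -
  obtain T where "T \<in> Tri n" "C = tri_rel n `` {T}"
    using C unfolding T_cls_def by (rule quotientE)
  then show ?thesis
    using Tri_imp_tri_of[OF n] by blast
qed

lemma sigma_cls_tri_of:
  assumes n: "2 \<le> n" and ts: "ts \<in> Btrees n"
  shows "sigma_cls n (tri_rel n `` {tri_of n ts p e}) = brel n `` {ts}"
proof -
  let ?C = "tri_rel n `` {tri_of n ts p e}"
  have "tri_of n ts p e \<in> ?C"
    using equiv_class_self[OF equiv_tri_rel tri_of_in_Tri[OF n ts]] .
  then have "(tri_of n ts p e, SOME T. T \<in> ?C) \<in> tri_rel n"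
    by (metis Image_singleton_iff someI)
  then obtain p' e' where "(SOME T. T \<in> ?C) = tri_of n ts p' e'"
    using tri_rel_tri_of n by fastforce
  moreover obtain m where "sigma_tri n (tri_of n ts p' e') = rotate m ts"
    using sigma_tri_tri_of[OF n ts] by blast
  moreover have "(ts, rotate m ts) \<in> brel n"
    using ts Btrees_rotate by (auto simp: brel_def)
  ultimately show ?thesis
    unfolding sigma_cls_def using equiv_class_eq[OF equiv_brel] by metis
qed

lemma tri_rel_class_rotate:
  assumes n: "2 \<le> n" and ts: "ts \<in> Btrees n"
  shows "tri_rel n `` {tri_of n (rotate k ts) p' e'} = tri_rel n `` {tri_of n ts p e}"
proof -
  have "forest_leaves ts = n"
    using ts by (simp add: Btrees_forest_leaves[OF n])
  then obtain q where q: "tri_of n (rotate k ts) q e = tri_of n ts p e"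
    using tri_of_rotate by blast
  have "rotate k ts \<in> Btrees n"
    using ts by (rule Btrees_rotate)
  then have "(tri_of n (rotate k ts) p' e', tri_of n (rotate k ts) q e) \<in> tri_rel n"
    using tri_of_in_Tri[OF n] equivclp_tri_of n by (simp add: tri_rel_def)
  then show ?thesis
    using q equiv_class_eq[OF equiv_tri_rel] by metis
qed

lemma inj_on_sigma_cls:
  assumes n: "2 \<le> n"
  shows "inj_on (sigma_cls n) (T_cls n)"
proof (rule inj_onI)
  fix C1 C2 assume C: "C1 \<in> T_cls n" "C2 \<in> T_cls n" "sigma_cls n C1 = sigma_cls n C2"
  obtain ts1 p1 e1 ts2 p2 e2 where ts: "ts1 \<in> Btrees n" "ts2 \<in> Btrees n"
    and C12: "C1 = tri_rel n `` {tri_of n ts1 p1 e1}" "C2 = tri_rel n `` {tri_of n ts2 p2 e2}"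
    using T_cls_tri_of[OF n C(1)] T_cls_tri_of[OF n C(2)] by blast
  then have "(ts1, ts2) \<in> brel n"
    using C(3) sigma_cls_tri_of[OF n] eq_equiv_class_iff[OF equiv_brel] by metis
  then obtain k where "ts2 = rotate k ts1"
    by (auto simp: brel_def)
  then show "C1 = C2"
    using tri_rel_class_rotate[OF n ts(1), of k p2 e2 p1 e1] C12 by simp
qed

lemma image_sigma_cls:
  assumes n: "2 \<le> n"
  shows "sigma_cls n ` T_cls n = B_cls n"
proof (intro equalityI subsetI)
  fix D assume "D \<in> sigma_cls n ` T_cls n"
  then obtain ts p e where "ts \<in> Btrees n" "D = sigma_cls n (tri_rel n `` {tri_of n ts p e})"
    using T_cls_tri_of[OF n] by blast
  then show "D \<in> B_cls n"
    using sigma_cls_tri_of[OF n] unfolding B_cls_def by (auto intro: quotientI)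
next
  fix D assume "D \<in> B_cls n"
  then obtain ts where "ts \<in> Btrees n" "D = brel n `` {ts}"
    unfolding B_cls_def by (rule quotientE)
  moreover have "tri_rel n `` {tri_of n ts 0 True} \<in> T_cls n"
    unfolding T_cls_def using tri_of_in_Tri[OF n \<open>ts \<in> Btrees n\<close>] by (rule quotientI)
  ultimately show "D \<in> sigma_cls n ` T_cls n"
    using sigma_cls_tri_of[OF n, of ts 0 True] by (metis image_eqI)
qed

text \<open>The argument only needs 2 \<le> n.\<close>
theorem theorem7p1:
  fixes n :: nat
  assumes "5 \<le> n"
  shows "bij_betw (sigma_cls n) (T_cls n) (B_cls n)"
proof -
  have "2 \<le> n"
    using assms by simp
  then show ?thesis
    unfolding bij_betw_def using inj_on_sigma_cls image_sigma_cls by blast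
qed

end
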